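(* Let $R$ be a ring with a complete, separated Zariskian filtration $w:R\to\mathbb{Z}\cup\{\infty\}$, let $(\sigma,\delta)$ be a skew derivation on $R$ compatible with $w$, and let $S=R^b[[x;\sigma,\delta]]$. Let $I$ be a closed ideal of $R$ with $\sigma(I)\subseteq I$ and $\delta(I)\subseteq I$, and let $(\overline\sigma,\overline\delta)$ be the induced skew derivation of $R/I$. Then $(\overline\sigma,\overline\delta)$ is compatible with the quotient filtration $\overline w(r+I)=\sup\{w(r+y):y\in I\}$. Moreover the closure $\overline{IS}$ of $IS$ in $S$ (with respect to $f_w$) is a two-sided ideal of $S$, and $S/\overline{IS}\cong(R/I)^b[[x;\overline\sigma,\overline\delta]]$.
   Context: Filtrations $u$ satisfy $u(0)=\infty$, $u(x+y)\ge\min$, $u(xy)\ge u(x)+u(y)$, are separated and descending with level sets $F_nR=\{u\ge n\}$; Zariskian means the Rees ring $\bigoplus_nF_nR\,t^{-n}$ is Noetherian and $F_1R\subseteq J(F_0R)$ ($R/I$ is complete with respect to $\overline w$). A skew derivation is $(\sigma,\delta)$ with $\sigma$ an automorphism and $\delta(ab)=\delta(a)b+\sigma(a)\delta(b)$; it is compatible with $u$ if $\deg_u(\sigma-\mathrm{id})>0$ and $\deg_u(\delta)>0$, where $\deg_u(d)=\inf_{x\ne0}\{u(d(x))-u(x)\}$. For complete $(R,u)$ and compatible $(\sigma,\delta)$, $R^b[[x;\sigma,\delta]]$ is the ring of series $\sum_{n\ge0}r_nx^n$ with $u(r_n)+\tfrac12n\to\infty$, with multiplication extending $xa=\sigma(a)x+\delta(a)$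 continuously and $R$-linearly, filtered by $f_u(\sum r_ix^i)=\inf_i\{u(r_i)+\tfrac12i\}$. *)

theory Defs
  imports "HOL-Library.Extended_Real" "HOL-Algebra.Algebra"
begin

text \<open>A (descending, integer valued) filtration w on a ring R, written as a valuation-like
  function with values in Z \<union> {\<infinity>}, embedded in ereal.\<close>
definition filtration :: "('a,'m) ring_scheme \<Rightarrow> ('a \<Rightarrow> ereal) \<Rightarrow> bool" where
  "filtration R w \<longleftrightarrow>
     (\<forall>x\<in>carrier R. w x = \<infinity> \<or> (\<exists>n::int. w x = ereal (real_of_int n))) \<and>
     w \<zero>\<^bsub>R\<^esub> = \<infinity> \<and>
     (\<forall>x\<in>carrier R. \<forall>y\<in>carrier R. w (x \<oplus>\<^bsub>R\<^esub> y) \<ge> min (w x) (w y)) \<and>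
     (\<forall>x\<in>carrier R. \<forall>y\<in>carrier R. w (x \<otimes>\<^bsub>R\<^esub> y) \<ge> w x + w y) \<and>
     (\<forall>x\<in>carrier R. w (\<ominus>\<^bsub>R\<^esub> x) = w x) \<and>
     w \<one>\<^bsub>R\<^esub> \<ge> 0"

definition separated :: "('a,'m) ring_scheme \<Rightarrow> ('a \<Rightarrow> ereal) \<Rightarrow> bool" where
  "separated R w \<longleftrightarrow> (\<forall>x\<in>carrier R. w x = \<infinity> \<longrightarrow> x = \<zero>\<^bsub>R\<^esub>)"

definition fconv :: "('a,'m) ring_scheme \<Rightarrow> ('a \<Rightarrow> ereal) \<Rightarrow> (nat \<Rightarrow> 'a) \<Rightarrow> 'a \<Rightarrow> bool" where
  "fconv R w a L \<longleftrightarrow> L \<in> carrier R \<and>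
     (\<forall>N::real. \<exists>M. \<forall>n\<ge>M. w (a n \<ominus>\<^bsub>R\<^esub> L) \<ge> ereal N)"

definition fcauchy :: "('a,'m) ring_scheme \<Rightarrow> ('a \<Rightarrow> ereal) \<Rightarrow> (nat \<Rightarrow> 'a) \<Rightarrow> bool" where
  "fcauchy R w a \<longleftrightarrow>
     (\<forall>N::real. \<exists>M. \<forall>m\<ge>M. \<forall>n\<ge>M. w (a m \<ominus>\<^bsub>R\<^esub> a n) \<ge> ereal N)"

definition fcomplete :: "('a,'m) ring_scheme \<Rightarrow> ('a \<Rightarrow> ereal) \<Rightarrow> bool" where
  "fcomplete R w \<longleftrightarrow> (\<forall>a. (\<forall>n. a n \<in> carrier R) \<longrightarrow> fcauchy R w a \<longrightarrow> (\<exists>L. fconv R w a L))"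

definition fclosed :: "('a,'m) ring_scheme \<Rightarrow> ('a \<Rightarrow> ereal) \<Rightarrow> 'a set \<Rightarrow> bool" where
  "fclosed R w A \<longleftrightarrow> (\<forall>a L. (\<forall>n. a n \<in> A) \<longrightarrow> fconv R w a L \<longrightarrow> L \<in> A)"

definition fsum :: "('a,'m) ring_scheme \<Rightarrow> ('a \<Rightarrow> ereal) \<Rightarrow> (nat \<Rightarrow> 'a) \<Rightarrow> 'a" where
  "fsum R w a = (THE L. fconv R w (\<lambda>m. finsum R a {..<m}) L)"

definition left_ideal :: "('a,'m) ring_scheme \<Rightarrow> 'a set \<Rightarrow> bool" where
  "left_ideal A L \<longleftrightarrow> additive_subgroup L A \<and>
     (\<forall>a\<in>carrier A. \<forall>x\<in>L. a \<otimes>\<^bsub>A\<^esub> x \<in> L)"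

definition right_ideal :: "('a,'m) ring_scheme \<Rightarrow> 'a set \<Rightarrow> bool" where
  "right_ideal A L \<longleftrightarrow> additive_subgroup L A \<and>
     (\<forall>a\<in>carrier A. \<forall>x\<in>L. x \<otimes>\<^bsub>A\<^esub> a \<in> L)"

definition noetherian :: "('a,'m) ring_scheme \<Rightarrow> bool" where
  "noetherian A \<longleftrightarrow> ring A \<and>
     (\<forall>L::nat \<Rightarrow> 'a set. (\<forall>n. left_ideal A (L n)) \<longrightarrow> (\<forall>n. L n \<subseteq> L (Suc n)) \<longrightarrow>
        (\<exists>N. \<forall>n\<ge>N. L n = L N)) \<and>
     (\<forall>L::nat \<Rightarrow> 'a set. (\<forall>n. right_ideal A (L n)) \<longrightarrow> (\<forall>n. L n \<subseteq> L (Suc n)) \<longrightarrow>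
        (\<exists>N. \<forall>n\<ge>N. L n = L N))"

definition maximal_left_ideal :: "('a,'m) ring_scheme \<Rightarrow> 'a set \<Rightarrow> bool" where
  "maximal_left_ideal A L \<longleftrightarrow> left_ideal A L \<and> L \<noteq> carrier A \<and>
     (\<forall>L'. left_ideal A L' \<longrightarrow> L \<subseteq> L' \<longrightarrow> L' = L \<or> L' = carrier A)"

definition jacobson :: "('a,'m) ring_scheme \<Rightarrow> 'a set" where
  "jacobson A = carrier A \<inter> \<Inter> {L. maximal_left_ideal A L}"

definition level :: "('a,'m) ring_scheme \<Rightarrow> ('a \<Rightarrow> ereal) \<Rightarrow> int \<Rightarrow> 'a set" where
  "level R w n = {x \<in> carrier R. w x \<ge> ereal (real_of_int n)}"

definition level0_ring :: "('a,'m) ring_scheme \<Rightarrow> ('a \<Rightarrow> ereal) \<Rightarrow> 'a ring" where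
  "level0_ring R w = \<lparr>carrier = level R w 0, monoid.mult = monoid.mult R, monoid.one = monoid.one R,
                      ring.zero = ring.zero R, ring.add = ring.add R\<rparr>"

text \<open>The Rees ring \<Oplus>_n F_n R t^(-n): finitely supported families f with f n \<in> F_n R.\<close>
definition rees_ring :: "('a,'m) ring_scheme \<Rightarrow> ('a \<Rightarrow> ereal) \<Rightarrow> (int \<Rightarrow> 'a) ring" where
  "rees_ring R w = \<lparr>carrier = {f. (\<forall>n. f n \<in> level R w n) \<and> finite {n. f n \<noteq> \<zero>\<^bsub>R\<^esub>}},
     monoid.mult = (\<lambda>f g n. finsum R (\<lambda>a. f a \<otimes>\<^bsub>R\<^esub> g (n - a)) {a. f a \<noteq> \<zero>\<^bsub>R\<^esub>}),
     monoid.one = (\<lambda>n. if n = 0 then \<one>\<^bsub>R\<^esub> else \<zero>\<^bsub>R\<^esub>),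
     ring.zero = (\<lambda>n. \<zero>\<^bsub>R\<^esub>),
     ring.add = (\<lambda>f g n. f n \<oplus>\<^bsub>R\<^esub> g n)\<rparr>"

definition zariskian :: "('a,'m) ring_scheme \<Rightarrow> ('a \<Rightarrow> ereal) \<Rightarrow> bool" where
  "zariskian R w \<longleftrightarrow> noetherian (rees_ring R w) \<and>
     level R w 1 \<subseteq> jacobson (level0_ring R w)"

definition skew_derivation :: "('a,'m) ring_scheme \<Rightarrow> ('a \<Rightarrow> 'a) \<Rightarrow> ('a \<Rightarrow> 'a) \<Rightarrow> bool" where
  "skew_derivation R \<sigma> \<delta> \<longleftrightarrow> \<sigma> \<in> ring_iso R R \<and> \<delta> \<in> carrier R \<rightarrow> carrier R \<and>
     (\<forall>a\<in>carrier R. \<forall>b\<in>carrier R. \<delta> (a \<oplus>\<^bsub>R\<^esub> b) = \<delta> a \<oplus>\<^bsub>R\<^esub> \<delta> b) \<and>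
     (\<forall>a\<in>carrier R. \<forall>b\<in>carrier R.
        \<delta> (a \<otimes>\<^bsub>R\<^esub> b) = \<delta> a \<otimes>\<^bsub>R\<^esub> b \<oplus>\<^bsub>R\<^esub> \<sigma> a \<otimes>\<^bsub>R\<^esub> \<delta> b)"

definition fdeg :: "('a,'m) ring_scheme \<Rightarrow> ('a \<Rightarrow> ereal) \<Rightarrow> ('a \<Rightarrow> 'a) \<Rightarrow> ereal" where
  "fdeg R w d = (INF x\<in>carrier R - {\<zero>\<^bsub>R\<^esub>}. w (d x) - w x)"

definition compatible :: "('a,'m) ring_scheme \<Rightarrow> ('a \<Rightarrow> ereal) \<Rightarrow> ('a \<Rightarrow> 'a) \<Rightarrow> ('a \<Rightarrow> 'a) \<Rightarrow> bool" where
  "compatible R w \<sigma> \<delta> \<longleftrightarrow> fdeg R w (\<lambda>x. \<sigma> x \<ominus>\<^bsub>R\<^esub> x) > 0 \<and> fdeg R w \<delta> > 0"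

text \<open>skw_coef i k a is the coefficient of x^k in x^i a = \<Sum>_k skw_coef i k a x^k,
  determined by x a = \<sigma>(a) x + \<delta>(a).\<close>
primrec skw_coef :: "('a,'m) ring_scheme \<Rightarrow> ('a \<Rightarrow> 'a) \<Rightarrow> ('a \<Rightarrow> 'a) \<Rightarrow> nat \<Rightarrow> nat \<Rightarrow> 'a \<Rightarrow> 'a" where
  "skw_coef R \<sigma> \<delta> 0 k a = (if k = 0 then a else \<zero>\<^bsub>R\<^esub>)"
| "skw_coef R \<sigma> \<delta> (Suc i) k a =
     (if k = 0 then \<zero>\<^bsub>R\<^esub> else \<sigma> (skw_coef R \<sigma> \<delta> i (k - 1) a))
     \<oplus>\<^bsub>R\<^esub> \<delta> (skw_coef R \<sigma> \<delta> i k a)"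

definition bseries :: "('a,'m) ring_scheme \<Rightarrow> ('a \<Rightarrow> ereal) \<Rightarrow> (nat \<Rightarrow> 'a) set" where
  "bseries R w = {r. (\<forall>n. r n \<in> carrier R) \<and>
       ((\<lambda>n. w (r n) + ereal (real n / 2)) \<longlongrightarrow> \<infinity>) sequentially}"

definition skew_ps :: "('a,'m) ring_scheme \<Rightarrow> ('a \<Rightarrow> ereal) \<Rightarrow> ('a \<Rightarrow> 'a) \<Rightarrow> ('a \<Rightarrow> 'a)
     \<Rightarrow> (nat \<Rightarrow> 'a) ring" where
  "skew_ps R w \<sigma> \<delta> = \<lparr>carrier = bseries R w,
     monoid.mult = (\<lambda>r s n. finsum R (\<lambda>j. fsum R w (\<lambda>i. r i \<otimes>\<^bsub>R\<^esub> skw_coef R \<sigma> \<delta> i (n - j) (s j))) {..n}),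
     monoid.one = (\<lambda>n. if n = 0 then \<one>\<^bsub>R\<^esub> else \<zero>\<^bsub>R\<^esub>),
     ring.zero = (\<lambda>n. \<zero>\<^bsub>R\<^esub>),
     ring.add = (\<lambda>r s n. r n \<oplus>\<^bsub>R\<^esub> s n)\<rparr>"

definition ps_filt :: "('a \<Rightarrow> ereal) \<Rightarrow> (nat \<Rightarrow> 'a) \<Rightarrow> ereal" where
  "ps_filt w r = (INF i. w (r i) + ereal (real i / 2))"

definition const_ps :: "('a,'m) ring_scheme \<Rightarrow> 'a \<Rightarrow> nat \<Rightarrow> 'a" where
  "const_ps R a = (\<lambda>n. if n = 0 then a else \<zero>\<^bsub>R\<^esub>)"

definition ideal_times_S :: "('a,'m) ring_scheme \<Rightarrow> ('a \<Rightarrow> ereal) \<Rightarrow> ('a \<Rightarrow> 'a) \<Rightarrow> ('a \<Rightarrow> 'a)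
     \<Rightarrow> 'a set \<Rightarrow> (nat \<Rightarrow> 'a) set" where
  "ideal_times_S R w \<sigma> \<delta> I =
     {finsum (skew_ps R w \<sigma> \<delta>)
        (\<lambda>k. const_ps R (a k) \<otimes>\<^bsub>skew_ps R w \<sigma> \<delta>\<^esub> s k) {..<(m::nat)} | m a s.
        \<forall>k<m. a k \<in> I \<and> s k \<in> bseries R w}"

definition ps_closure :: "('a,'m) ring_scheme \<Rightarrow> ('a \<Rightarrow> ereal) \<Rightarrow> (nat \<Rightarrow> 'a) set \<Rightarrow> (nat \<Rightarrow> 'a) set" where
  "ps_closure R w A = {s \<in> bseries R w. \<forall>N::real. \<exists>t\<in>A.
       ps_filt w (\<lambda>n. s n \<ominus>\<^bsub>R\<^esub> t n) \<ge> ereal N}"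

definition quot_filt :: "('a \<Rightarrow> ereal) \<Rightarrow> 'a set \<Rightarrow> ereal" where
  "quot_filt w C = Sup (w ` C)"

definition quot_map :: "('a,'m) ring_scheme \<Rightarrow> 'a set \<Rightarrow> ('a \<Rightarrow> 'a) \<Rightarrow> 'a set \<Rightarrow> 'a set" where
  "quot_map R I f C = I +>\<^bsub>R\<^esub> f (SOME r. r \<in> C)"

end

theory Submission
  imports Defs
begin

text \<open>
  Since w is integer valued, compatibility means that \<sigma> - id and \<delta> raise w by at least 1.
  Both maps send the coset of x into the coset of its image, so they also raise the quotient
  filtration by 1; as I is closed, the quotient filtration is infinite only on I. The same estimate
  for \<sigma> - id shows that \<sigma>(x) \<in> I forces x \<in> I, which makes the induced map bijective.

  Reducing coefficients modulo I maps R^b[[x;\<sigma>,\<delta>]] onto (R/I)^b[[x;\<sigma>,\<delta>]]. The reduction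
  commutes with the convergent sums defining the product, so it is a ring homomorphism (which also
  shows that the target is a ring), and it is surjective because every coset has a representative
  of almost maximal filtration. Its kernel, the series with all coefficients in I, is the closure
  of IS: truncations of such a series lie in IS, and I is closed. Associativity of R^b[[x;\<sigma>,\<delta>]]
  itself is reduced, by approximating series with polynomials, to the monomial x, where
  (x v) a = x (v a) follows from the twisted Leibniz rule for \<delta>.
\<close>

lemma ereal_le_if_reals_below: "(\<And>B. ereal B < (a::ereal) \<Longrightarrow> ereal B \<le> b) \<Longrightarrow> a \<le> b"
  by (metis ereal_dense2 not_le order.strict_trans1 less_irrefl)

lemma ereal_le_weaken: "ereal p \<le> z \<Longrightarrow> q \<le> p \<Longrightarrow> ereal q \<le> z"
  by (meson ereal_less_eq(3) order.trans)

lemma ereal_add_one_le: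
  assumes "c \<noteq> -\<infinity>" "\<And>B. ereal B < c \<Longrightarrow> ereal (B + 1) \<le> e"
  shows "c + 1 \<le> e"
proof (cases c)
  case (real r)
  show ?thesis
  proof (cases e)
    case (real s)
    have "r + 1 \<le> s + \<epsilon>" if "\<epsilon> > 0" for \<epsilon>
      using assms(2)[of "r - \<epsilon>"] real \<open>c = ereal r\<close> that by simp
    then have "r + 1 \<le> s" by (rule field_le_epsilon)
    then show ?thesis using real \<open>c = ereal r\<close> by simp
  next
    case PInf then show ?thesis by simp
  next
    case MInf then show ?thesis using assms(2)[of "r - 1"] real by simp
  qed
next
  case PInf
  then have "ereal B \<le> e" for B using assms(2)[of "B - 1"] by simp
  then have "e = \<infinity>" by (rule ereal_top)
  then show ?thesis by simp
next
  case MInf then show ?thesis using assms by simp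
qed

section \<open>Convergent sums in a complete filtered ring\<close>

locale complete_filtered_ring = ring R for R :: "('a,'m) ring_scheme" (structure) +
  fixes w :: "'a \<Rightarrow> ereal"
  assumes filtration: "filtration R w" and separated: "separated R w" and complete: "fcomplete R w"
begin

lemma w_zero[simp]: "w \<zero> = \<infinity>"
  using filtration unfolding filtration_def by blast

lemma w_add: "x \<in> carrier R \<Longrightarrow> y \<in> carrier R \<Longrightarrow> min (w x) (w y) \<le> w (x \<oplus> y)"
  using filtration unfolding filtration_def by blast

lemma w_mult: "x \<in> carrier R \<Longrightarrow> y \<in> carrier R \<Longrightarrow> w x + w y \<le> w (x \<otimes> y)"
  using filtration unfolding filtration_def by blast

lemma w_neg[simp]: "x \<in> carrier R \<Longrightarrow> w (\<ominus> x) = w x"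
  using filtration unfolding filtration_def by blast

lemma w_int_or_PInf: "x \<in> carrier R \<Longrightarrow> w x = \<infinity> \<or> (\<exists>n::int. w x = ereal (real_of_int n))"
  using filtration unfolding filtration_def by blast

lemma w_not_MInf[simp]: "x \<in> carrier R \<Longrightarrow> w x \<noteq> -\<infinity>"
  using w_int_or_PInf by fastforce

lemma w_real_lower_bound: "x \<in> carrier R \<Longrightarrow> \<exists>B. ereal B \<le> w x"
  by (cases "w x") auto

lemma w_eq_PInf_imp_zero: "x \<in> carrier R \<Longrightarrow> w x = \<infinity> \<Longrightarrow> x = \<zero>"
  using separated unfolding separated_def by blast

lemma zero_if_w_unbounded: "x \<in> carrier R \<Longrightarrow> (\<And>N::real. ereal N \<le> w x) \<Longrightarrow> x = \<zero>"
  using w_eq_PInf_imp_zero ereal_top by blast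

lemma w_add_ge: "x \<in> carrier R \<Longrightarrow> y \<in> carrier R \<Longrightarrow> B \<le> w x \<Longrightarrow> B \<le> w y \<Longrightarrow> B \<le> w (x \<oplus> y)"
  by (meson min.boundedI order.trans w_add)

lemma w_minus_ge: "x \<in> carrier R \<Longrightarrow> y \<in> carrier R \<Longrightarrow> B \<le> w x \<Longrightarrow> B \<le> w y \<Longrightarrow> B \<le> w (x \<ominus> y)"
  unfolding a_minus_def by (simp add: w_add_ge)

lemma w_mult_ge:
  assumes "x \<in> carrier R" "y \<in> carrier R" "ereal A \<le> w x" "ereal B \<le> w y"
  shows "ereal (A + B) \<le> w (x \<otimes> y)"
proof -
  have "ereal A + ereal B \<le> w x + w y" using assms(3,4) by (rule add_mono)
  also have "\<dots> \<le> w (x \<otimes> y)" using w_mult assms by blast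
  finally show ?thesis by simp
qed

lemma w_minus_commute: "x \<in> carrier R \<Longrightarrow> y \<in> carrier R \<Longrightarrow> w (x \<ominus> y) = w (y \<ominus> x)"
  by (metis minus_minus a_minus_def minus_add add.inv_closed a_comm w_neg add.m_closed)

lemma w_finsum_ge:
  assumes "finite A" "f \<in> A \<rightarrow> carrier R" "\<And>i. i \<in> A \<Longrightarrow> B \<le> w (f i)"
  shows "B \<le> w (finsum R f A)"
  using assms by (induction A rule: finite_induct) (simp_all add: finsum_insert w_add_ge finsum_closed)

lemma finsum_indicator:
  assumes "k \<in> A" "finite A" "x \<in> carrier R"
  shows "finsum R (\<lambda>j. if j = k then x else \<zero>) A = x"
  using add.finprod_singleton_swap[of k A "\<lambda>j. x"] assms by simp

definition tends_to_zero :: "(nat \<Rightarrow> 'a) \<Rightarrow> bool" where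
  "tends_to_zero a \<longleftrightarrow> (\<forall>N::real. \<exists>M. \<forall>i\<ge>M. ereal N \<le> w (a i))"

definition partial_sum :: "(nat \<Rightarrow> 'a) \<Rightarrow> nat \<Rightarrow> 'a" where
  "partial_sum a m = finsum R a {..<m}"

lemma partial_sum_closed[simp]: "(\<And>i. a i \<in> carrier R) \<Longrightarrow> partial_sum a m \<in> carrier R"
  unfolding partial_sum_def by (simp add: Pi_def)

lemma partial_sum_split:
  assumes "\<And>i. a i \<in> carrier R" "n \<le> m"
  shows "partial_sum a m = partial_sum a n \<oplus> finsum R a {n..<m}"
proof -
  have "{..<m} = {..<n} \<union> {n..<m}" using assms(2) by auto
  then show ?thesis
    unfolding partial_sum_def using assms(1) by (simp add: finsum_Un_disjoint Pi_def ivl_disj_int)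
qed

lemma partial_sum_diff:
  assumes "\<And>i. a i \<in> carrier R" "n \<le> m"
  shows "partial_sum a m \<ominus> partial_sum a n = finsum R a {n..<m}"
  using assms partial_sum_split[OF assms]
  by (simp add: Pi_def a_minus_def a_comm[of "partial_sum a n"] a_assoc finsum_closed r_neg)

lemma fconv_unique:
  assumes "fconv R w b L" "fconv R w b L'" "\<And>n. b n \<in> carrier R"
  shows "L = L'"
proof -
  have L: "L \<in> carrier R" "L' \<in> carrier R" using assms unfolding fconv_def by auto
  have "ereal N \<le> w (L' \<ominus> L)" for N :: real
  proof -
    obtain M1 where M1: "\<forall>n\<ge>M1. ereal N \<le> w (b n \<ominus> L)" using assms(1) unfolding fconv_def by blast
    obtain M2 where M2: "\<forall>n\<ge>M2. ereal N \<le> w (b n \<ominus> L')" using assms(2) unfolding fconv_def by blast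
    let ?n = "max M1 M2"
    have e: "L' \<ominus> L = (b ?n \<ominus> L) \<ominus> (b ?n \<ominus> L')"
      using L assms(3)[of ?n] by (simp add: a_minus_def minus_add a_ac r_neg1 r_neg2 r_neg)
    show ?thesis unfolding e by (rule w_minus_ge) (use L assms(3) M1 M2 in auto)
  qed
  then show ?thesis using zero_if_w_unbounded[of "L' \<ominus> L"] L by simp
qed

lemma cauchy_partial_sum:
  assumes "\<And>i. a i \<in> carrier R" "tends_to_zero a"
  shows "fcauchy R w (partial_sum a)"
  unfolding fcauchy_def
proof
  fix N :: real
  obtain M where M: "\<forall>i\<ge>M. ereal N \<le> w (a i)" using assms(2) unfolding tends_to_zero_def by blast
  have *: "ereal N \<le> w (partial_sum a m \<ominus> partial_sum a n)" if "M \<le> n" "n \<le> m" for m n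
    using that M assms(1) by (subst partial_sum_diff) (auto intro!: w_finsum_ge)
  show "\<exists>M. \<forall>m\<ge>M. \<forall>n\<ge>M. ereal N \<le> w (partial_sum a m \<ominus> partial_sum a n)"
  proof (intro exI allI impI)
    fix m n assume "M \<le> m" "M \<le> n"
    then show "ereal N \<le> w (partial_sum a m \<ominus> partial_sum a n)"
      using *[of n m] *[of m n] assms(1) w_minus_commute[of "partial_sum a m" "partial_sum a n"]
      by (cases "n \<le> m") auto
  qed
qed

lemma fsum_eqI:
  assumes "\<And>i. a i \<in> carrier R" "fconv R w (partial_sum a) L"
  shows "fsum R w a = L"
  unfolding fsum_def using assms fconv_unique[of "partial_sum a" L] unfolding partial_sum_def[symmetric]
  by (metis (no_types, lifting) partial_sum_closed the_equality partial_sum_def)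

lemma fconv_fsum:
  assumes "\<And>i. a i \<in> carrier R" "tends_to_zero a"
  shows "fconv R w (partial_sum a) (fsum R w a)"
proof -
  obtain L where "fconv R w (partial_sum a) L"
    using complete cauchy_partial_sum[OF assms] assms(1) unfolding fcomplete_def by force
  then show ?thesis using fsum_eqI[OF assms(1)] by simp
qed

lemma fsum_closed: "(\<And>i. a i \<in> carrier R) \<Longrightarrow> tends_to_zero a \<Longrightarrow> fsum R w a \<in> carrier R"
  using fconv_fsum unfolding fconv_def by blast

lemma w_fsum_ge:
  assumes "\<And>i. a i \<in> carrier R" "tends_to_zero a" "\<And>i. ereal B \<le> w (a i)"
  shows "ereal B \<le> w (fsum R w a)"
proof -
  have c: "fsum R w a \<in> carrier R" using fsum_closed assms by auto
  obtain M where M: "ereal B \<le> w (partial_sum a M \<ominus> fsum R w a)"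
    using fconv_fsum[OF assms(1,2)] unfolding fconv_def by blast
  have p: "ereal B \<le> w (partial_sum a M)" unfolding partial_sum_def using assms by (intro w_finsum_ge) auto
  have "fsum R w a = partial_sum a M \<ominus> (partial_sum a M \<ominus> fsum R w a)"
    using c assms(1) partial_sum_closed by algebra
  also have "ereal B \<le> w \<dots>" by (rule w_minus_ge[OF _ _ p M]) (use c assms(1) in auto)
  finally show ?thesis .
qed

lemma fsum_in_closed_subgroup:
  assumes "additive_subgroup J R" "fclosed R w J" "\<And>i. a i \<in> J" "tends_to_zero a"
  shows "fsum R w a \<in> J"
proof -
  have ac: "\<And>i. a i \<in> carrier R" using assms(1,3) additive_subgroup.a_subset by blast
  have "partial_sum a m \<in> J" for m
    unfolding partial_sum_def
  proof (induction m)
    case 0 then show ?case using assms(1) by (simp add: additive_subgroup.zero_closed)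
  next
    case (Suc m)
    then show ?case using assms(1,3) ac by (simp add: finsum_Suc2 Pi_def lessThan_Suc finsum_insert
        finsum_closed additive_subgroup.a_closed a_comm)
  qed
  then show ?thesis using assms(2) fconv_fsum[OF ac assms(4)] unfolding fclosed_def by blast
qed

lemma fsum_eq_finsum:
  assumes "\<And>i. a i \<in> carrier R" "\<And>i. m \<le> i \<Longrightarrow> a i = \<zero>"
  shows "fsum R w a = finsum R a {..<m}" "tends_to_zero a"
proof -
  have "partial_sum a n = finsum R a {..<m}" if "m \<le> n" for n
  proof -
    have "finsum R a {m..<n} = \<zero>" using assms by (simp add: finsum_zero cong: finsum_cong)
    then show ?thesis using partial_sum_split[OF assms(1) that] assms(1)
      unfolding partial_sum_def by (simp add: Pi_def finsum_closed)
  qed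
  then have "fconv R w (partial_sum a) (finsum R a {..<m})" unfolding fconv_def
    using assms(1) by (auto simp: Pi_def finsum_closed r_neg a_minus_def intro!: exI[of _ m])
  then show "fsum R w a = finsum R a {..<m}" by (rule fsum_eqI[OF assms(1)])
  show "tends_to_zero a" unfolding tends_to_zero_def using assms(2) by (intro allI exI[of _ m]) simp
qed

lemma fsum_zero[simp]: "fsum R w (\<lambda>i. \<zero>) = \<zero>"
  using fsum_eq_finsum[of "\<lambda>i. \<zero>" 0] by simp

lemma fsum_single:
  assumes "x \<in> carrier R"
  shows "fsum R w (\<lambda>i. if i = k then x else \<zero>) = x" "tends_to_zero (\<lambda>i. if i = k then x else \<zero>)"
  using fsum_eq_finsum[of "\<lambda>i. if i = k then x else \<zero>" "Suc k"] finsum_indicator[of k "{..<Suc k}" x] assms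
  by auto

lemma fsum_shift:
  assumes "\<And>i. a i \<in> carrier R" "tends_to_zero a"
  shows "fsum R w (\<lambda>i. if i = 0 then \<zero> else a (i - 1)) = fsum R w a"
    "tends_to_zero (\<lambda>i. if i = 0 then \<zero> else a (i - 1))"
proof -
  let ?b = "\<lambda>i. if i = 0 then \<zero> else a (i - 1)"
  have bc: "\<And>i. ?b i \<in> carrier R" using assms by auto
  have ps: "partial_sum ?b (Suc n) = partial_sum a n" for n
  proof -
    have "{..<Suc n} = insert 0 (Suc ` {..<n})" by (auto simp: image_iff less_Suc_eq_0_disj)
    then have "partial_sum ?b (Suc n) = finsum R ?b (Suc ` {..<n})" unfolding partial_sum_def using bc
      by (simp add: finsum_insert Pi_def finsum_closed image_iff)
    also have "\<dots> = finsum R (\<lambda>i. ?b (Suc i)) {..<n}" by (rule finsum_reindex) (use bc in auto)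
    finally show ?thesis unfolding partial_sum_def by simp
  qed
  have "fconv R w (partial_sum ?b) (fsum R w a)" unfolding fconv_def
  proof (intro conjI allI)
    show "fsum R w a \<in> carrier R" using fsum_closed assms by blast
    fix N :: real
    obtain M where M: "\<forall>n\<ge>M. ereal N \<le> w (partial_sum a n \<ominus> fsum R w a)"
      using fconv_fsum[OF assms] unfolding fconv_def by blast
    show "\<exists>M. \<forall>n\<ge>M. ereal N \<le> w (partial_sum ?b n \<ominus> fsum R w a)"
    proof (intro exI allI impI)
      fix n assume "Suc M \<le> n"
      then obtain n' where "n = Suc n'" "M \<le> n'" by (cases n) auto
      then show "ereal N \<le> w (partial_sum ?b n \<ominus> fsum R w a)" using M ps by simp
    qed
  qed
  then show "fsum R w ?b = fsum R w a" by (rule fsum_eqI[OF bc])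
  show "tends_to_zero ?b" unfolding tends_to_zero_def
  proof
    fix N :: real
    obtain M where "\<forall>i\<ge>M. ereal N \<le> w (a i)" using assms(2) unfolding tends_to_zero_def by blast
    then show "\<exists>M. \<forall>i\<ge>M. ereal N \<le> w (?b i)" by (intro exI[of _ "Suc M"]) auto
  qed
qed

lemma fsum_add:
  assumes "\<And>i. a i \<in> carrier R" "\<And>i. b i \<in> carrier R" "tends_to_zero a" "tends_to_zero b"
  shows "fsum R w (\<lambda>i. a i \<oplus> b i) = fsum R w a \<oplus> fsum R w b"
proof -
  have ca: "fconv R w (partial_sum a) (fsum R w a)" "fsum R w a \<in> carrier R"
    using fconv_fsum[OF assms(1,3)] fsum_closed[OF assms(1,3)] by auto
  have cb: "fconv R w (partial_sum b) (fsum R w b)" "fsum R w b \<in> carrier R"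
    using fconv_fsum[OF assms(2,4)] fsum_closed[OF assms(2,4)] by auto
  have ps: "partial_sum (\<lambda>i. a i \<oplus> b i) m = partial_sum a m \<oplus> partial_sum b m" for m
    unfolding partial_sum_def using assms(1,2) by (simp add: finsum_addf Pi_def)
  have e: "(x \<oplus> y) \<ominus> (u \<oplus> v) = (x \<ominus> u) \<oplus> (y \<ominus> v)"
    if "x \<in> carrier R" "y \<in> carrier R" "u \<in> carrier R" "v \<in> carrier R" for x y u v
    using that by algebra
  have "fconv R w (partial_sum (\<lambda>i. a i \<oplus> b i)) (fsum R w a \<oplus> fsum R w b)"
    unfolding fconv_def
  proof (intro conjI allI)
    show "fsum R w a \<oplus> fsum R w b \<in> carrier R" using ca cb by auto
    fix N :: real
    obtain M1 where M1: "\<forall>n\<ge>M1. ereal N \<le> w (partial_sum a n \<ominus> fsum R w a)"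
      using ca unfolding fconv_def by auto
    obtain M2 where M2: "\<forall>n\<ge>M2. ereal N \<le> w (partial_sum b n \<ominus> fsum R w b)"
      using cb unfolding fconv_def by auto
    have "ereal N \<le> w (partial_sum (\<lambda>i. a i \<oplus> b i) n \<ominus> (fsum R w a \<oplus> fsum R w b))"
      if "max M1 M2 \<le> n" for n
      unfolding ps using that M1 M2 ca cb assms(1,2) by (subst e) (auto intro!: w_add_ge)
    then show "\<exists>M. \<forall>n\<ge>M. ereal N \<le> w (partial_sum (\<lambda>i. a i \<oplus> b i) n \<ominus> (fsum R w a \<oplus> fsum R w b))"
      by blast
  qed
  then show ?thesis by (intro fsum_eqI) (use assms(1,2) in auto)
qed

lemma tends_to_zero_mult:
  assumes "\<And>i. x i \<in> carrier R" "\<And>i. y i \<in> carrier R"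
    "\<And>i. ereal (P - real i / 2) \<le> w (x i)" "\<And>i. ereal (Q + real i) \<le> w (y i)"
  shows "tends_to_zero (\<lambda>i. x i \<otimes> y i)"
  unfolding tends_to_zero_def
proof
  fix N :: real
  obtain M :: nat where M: "real M \<ge> 2 * (N - P - Q)" by (meson real_arch_simple)
  have "ereal N \<le> w (x i \<otimes> y i)" if "i \<ge> M" for i
  proof -
    have "ereal ((P - real i / 2) + (Q + real i)) \<le> w (x i \<otimes> y i)"
      using assms by (intro w_mult_ge) auto
    moreover have "N \<le> (P - real i / 2) + (Q + real i)" using M of_nat_mono[OF that, where 'a=real]
      by (simp add: field_simps)
    ultimately show ?thesis by (rule ereal_le_weaken)
  qed
  then show "\<exists>M. \<forall>i\<ge>M. ereal N \<le> w (x i \<otimes> y i)" by blast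
qed

definition additive :: "('a \<Rightarrow> 'a) \<Rightarrow> bool" where
  "additive f \<longleftrightarrow> (\<forall>x\<in>carrier R. f x \<in> carrier R) \<and>
     (\<forall>x\<in>carrier R. \<forall>y\<in>carrier R. f (x \<oplus> y) = f x \<oplus> f y)"

lemma additive_zero: "additive f \<Longrightarrow> f \<zero> = \<zero>"
  unfolding additive_def by (metis zero_closed l_zero r_zero add.l_cancel)

lemma additive_neg: "additive f \<Longrightarrow> x \<in> carrier R \<Longrightarrow> f (\<ominus> x) = \<ominus> f x"
  using additive_zero unfolding additive_def by (metis add.inv_closed l_neg minus_equality)

lemma additive_minus: "additive f \<Longrightarrow> x \<in> carrier R \<Longrightarrow> y \<in> carrier R \<Longrightarrow> f (x \<ominus> y) = f x \<ominus> f y"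
  using additive_neg unfolding a_minus_def additive_def by simp

lemma additive_finsum:
  assumes "finite A" "additive f" "g \<in> A \<rightarrow> carrier R"
  shows "f (finsum R g A) = finsum R (\<lambda>i. f (g i)) A"
  using assms
proof (induction A rule: finite_induct)
  case empty then show ?case by (simp add: additive_zero)
next
  case (insert x F)
  then have "(\<lambda>i. f (g i)) \<in> F \<rightarrow> carrier R" "f (g x) \<in> carrier R" unfolding additive_def by auto
  with insert show ?case unfolding additive_def by (simp add: finsum_insert finsum_closed)
qed

lemma fsum_additive:
  assumes f: "additive f" "\<And>x B. x \<in> carrier R \<Longrightarrow> ereal B \<le> w x \<Longrightarrow> ereal (B + K) \<le> w (f x)"
    and a: "\<And>i. a i \<in> carrier R" "tends_to_zero a"
  shows "tends_to_zero (\<lambda>i. f (a i))" "fsum R w (\<lambda>i. f (a i)) = f (fsum R w a)"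
proof -
  have shift: "ereal N \<le> w (f x)" if "x \<in> carrier R" "ereal (N - K) \<le> w x" for x N
    using f(2)[OF that] by simp
  show "tends_to_zero (\<lambda>i. f (a i))" unfolding tends_to_zero_def
  proof
    fix N :: real
    obtain M where "\<forall>i\<ge>M. ereal (N - K) \<le> w (a i)" using a(2) unfolding tends_to_zero_def by blast
    then show "\<exists>M. \<forall>i\<ge>M. ereal N \<le> w (f (a i))" using a(1) shift by blast
  qed
  have fa: "\<And>i. f (a i) \<in> carrier R" using f(1) a(1) unfolding additive_def by auto
  have c: "fconv R w (partial_sum a) (fsum R w a)" "fsum R w a \<in> carrier R"
    using fconv_fsum a fsum_closed by auto
  have ps: "partial_sum (\<lambda>i. f (a i)) n \<ominus> f (fsum R w a) = f (partial_sum a n \<ominus> fsum R w a)" for n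
    unfolding partial_sum_def using additive_finsum[OF _ f(1), of "{..<n}" a] a(1) c(2)
      additive_minus[OF f(1), of "partial_sum a n" "fsum R w a"]
    by (simp add: partial_sum_def Pi_def)
  have "fconv R w (partial_sum (\<lambda>i. f (a i))) (f (fsum R w a))"
    unfolding fconv_def
  proof (intro conjI allI)
    show "f (fsum R w a) \<in> carrier R" using c f(1) unfolding additive_def by auto
    fix N :: real
    obtain M where "\<forall>n\<ge>M. ereal (N - K) \<le> w (partial_sum a n \<ominus> fsum R w a)"
      using c(1) unfolding fconv_def by blast
    then show "\<exists>M. \<forall>n\<ge>M. ereal N \<le> w (partial_sum (\<lambda>i. f (a i)) n \<ominus> f (fsum R w a))"
      unfolding ps using a(1) c(2) shift by (meson minus_closed partial_sum_closed)
  qed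
  then show "fsum R w (\<lambda>i. f (a i)) = f (fsum R w a)" by (rule fsum_eqI[OF fa])
qed

lemma fsum_left_mult:
  assumes "a \<in> carrier R" "\<And>i. b i \<in> carrier R" "tends_to_zero b"
  shows "fsum R w (\<lambda>i. a \<otimes> b i) = a \<otimes> fsum R w b" "tends_to_zero (\<lambda>i. a \<otimes> b i)"
proof -
  obtain K where K: "w a = ereal K \<or> a = \<zero>"
    using w_int_or_PInf[OF assms(1)] w_eq_PInf_imp_zero[OF assms(1)] by blast
  have "ereal (B + K) \<le> w (a \<otimes> x)" if "x \<in> carrier R" "ereal B \<le> w x" for x B
    using K that assms(1) w_mult_ge[of a x K B] by (auto simp: add.commute)
  moreover have "additive (\<lambda>x. a \<otimes> x)" unfolding additive_def using assms(1) by (simp add: r_distr)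
  ultimately show "fsum R w (\<lambda>i. a \<otimes> b i) = a \<otimes> fsum R w b" "tends_to_zero (\<lambda>i. a \<otimes> b i)"
    using fsum_additive[of "\<lambda>x. a \<otimes> x" K b] assms by auto
qed

end

section \<open>Compatible skew derivations\<close>

locale skew_filtered_ring = complete_filtered_ring +
  fixes \<sigma> \<delta> :: "'a \<Rightarrow> 'a"
  assumes skew: "skew_derivation R \<sigma> \<delta>" and compatible: "compatible R w \<sigma> \<delta>"
begin

abbreviation coef where "coef \<equiv> skw_coef R \<sigma> \<delta>"

lemma sigma_hom: "\<sigma> \<in> ring_hom R R"
  using skew unfolding skew_derivation_def ring_iso_def by blast

lemma sigma_bij: "bij_betw \<sigma> (carrier R) (carrier R)"
  using skew unfolding skew_derivation_def ring_iso_def by blast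

lemma sigma_closed[simp]: "x \<in> carrier R \<Longrightarrow> \<sigma> x \<in> carrier R"
  by (rule ring_hom_closed[OF sigma_hom])

lemma sigma_add: "x \<in> carrier R \<Longrightarrow> y \<in> carrier R \<Longrightarrow> \<sigma> (x \<oplus> y) = \<sigma> x \<oplus> \<sigma> y"
  by (rule ring_hom_add[OF sigma_hom])

lemma sigma_mult: "x \<in> carrier R \<Longrightarrow> y \<in> carrier R \<Longrightarrow> \<sigma> (x \<otimes> y) = \<sigma> x \<otimes> \<sigma> y"
  by (rule ring_hom_mult[OF sigma_hom])

lemma sigma_one[simp]: "\<sigma> \<one> = \<one>"
  by (rule ring_hom_one[OF sigma_hom])

lemma sigma_additive: "additive \<sigma>"
  unfolding additive_def by (simp add: sigma_add)

lemma sigma_zero[simp]: "\<sigma> \<zero> = \<zero>"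
  using additive_zero[OF sigma_additive] .

lemma delta_closed[simp]: "x \<in> carrier R \<Longrightarrow> \<delta> x \<in> carrier R"
  using skew unfolding skew_derivation_def by blast

lemma delta_add: "x \<in> carrier R \<Longrightarrow> y \<in> carrier R \<Longrightarrow> \<delta> (x \<oplus> y) = \<delta> x \<oplus> \<delta> y"
  using skew unfolding skew_derivation_def by blast

lemma delta_mult: "x \<in> carrier R \<Longrightarrow> y \<in> carrier R \<Longrightarrow> \<delta> (x \<otimes> y) = \<delta> x \<otimes> y \<oplus> \<sigma> x \<otimes> \<delta> y"
  using skew unfolding skew_derivation_def by blast

lemma delta_additive: "additive \<delta>"
  unfolding additive_def by (simp add: delta_add)

lemma delta_zero[simp]: "\<delta> \<zero> = \<zero>"
  using additive_zero[OF delta_additive] .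

lemma delta_one[simp]: "\<delta> \<one> = \<zero>"
proof -
  have "\<delta> \<one> \<oplus> \<delta> \<one> = \<delta> \<one> \<oplus> \<zero>" using delta_mult[of \<one> \<one>] by simp
  then show ?thesis by (metis delta_closed one_closed zero_closed add.l_cancel)
qed

text \<open>Since w is integer valued, a positive degree means that d raises the filtration by at
  least 1.\<close>

lemma w_step_if_fdeg_pos:
  assumes d: "fdeg R w d > 0" "d \<zero> = \<zero>" "\<And>x. x \<in> carrier R \<Longrightarrow> d x \<in> carrier R"
    and x: "x \<in> carrier R" "ereal B \<le> w x"
  shows "ereal (B + 1) \<le> w (d x)"
proof (cases "x = \<zero>")
  case True then show ?thesis using d by simp
next
  case False
  have pos: "0 < w (d x) - w x" using d(1) x False unfolding fdeg_def by (auto dest: less_INF_D)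
  obtain n :: int where n: "w x = ereal (real_of_int n)"
    using w_int_or_PInf[OF x(1)] w_eq_PInf_imp_zero[OF x(1)] False by blast
  consider "w (d x) = \<infinity>" | m :: int where "w (d x) = ereal (real_of_int m)"
    using w_int_or_PInf d(3) x by blast
  then show ?thesis
  proof cases
    case (2 m)
    then have "real_of_int n + 1 \<le> real_of_int m" using pos n by simp
    then show ?thesis using x(2) n 2 by simp
  qed simp
qed

lemma w_sigma_minus_id_ge: "x \<in> carrier R \<Longrightarrow> ereal B \<le> w x \<Longrightarrow> ereal (B + 1) \<le> w (\<sigma> x \<ominus> x)"
  using compatible unfolding compatible_def
  by (intro w_step_if_fdeg_pos[where d = "\<lambda>x. \<sigma> x \<ominus> x"]) (auto simp: r_neg a_minus_def)

lemma w_delta_ge: "x \<in> carrier R \<Longrightarrow> ereal B \<le> w x \<Longrightarrow> ereal (B + 1) \<le> w (\<delta> x)"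
  using compatible unfolding compatible_def by (intro w_step_if_fdeg_pos[where d = \<delta>]) auto

lemma w_sigma_ge: "x \<in> carrier R \<Longrightarrow> ereal B \<le> w x \<Longrightarrow> ereal B \<le> w (\<sigma> x)"
proof -
  assume x: "x \<in> carrier R" "ereal B \<le> w x"
  have "ereal B \<le> w (\<sigma> x \<ominus> x)"
    using w_sigma_minus_id_ge[OF x] by (rule order.trans[rotated]) simp
  then have "ereal B \<le> w ((\<sigma> x \<ominus> x) \<oplus> x)" using x by (intro w_add_ge) auto
  moreover have "(\<sigma> x \<ominus> x) \<oplus> x = \<sigma> x" using x(1) sigma_closed[OF x(1)] by algebra
  ultimately show ?thesis by simp
qed

lemma fsum_sigma:
  assumes "\<And>i. b i \<in> carrier R" "tends_to_zero b"
  shows "fsum R w (\<lambda>i. \<sigma> (b i)) = \<sigma> (fsum R w b)" "tends_to_zero (\<lambda>i. \<sigma> (b i))"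
  using fsum_additive[OF sigma_additive, of 0 b] w_sigma_ge assms by auto

lemma fsum_delta:
  assumes "\<And>i. b i \<in> carrier R" "tends_to_zero b"
  shows "fsum R w (\<lambda>i. \<delta> (b i)) = \<delta> (fsum R w b)" "tends_to_zero (\<lambda>i. \<delta> (b i))"
  using fsum_additive[OF delta_additive, of 1 b] w_delta_ge assms by auto

lemma coef_closed[simp]: "a \<in> carrier R \<Longrightarrow> coef i k a \<in> carrier R"
  by (induction i arbitrary: k) auto

lemma coef_zero[simp]: "coef i k \<zero> = \<zero>"
  by (induction i arbitrary: k) auto

lemma coef_add: "a \<in> carrier R \<Longrightarrow> b \<in> carrier R \<Longrightarrow> coef i k (a \<oplus> b) = coef i k a \<oplus> coef i k b"
proof (induction i arbitrary: k)
  case 0 then show ?case by simp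
next
  case (Suc i)
  have e: "(p \<oplus> q) \<oplus> (r \<oplus> s) = (p \<oplus> r) \<oplus> (q \<oplus> s)"
    if "p \<in> carrier R" "q \<in> carrier R" "r \<in> carrier R" "s \<in> carrier R" for p q r s
    using that by algebra
  show ?case using Suc by (simp add: sigma_add delta_add e)
qed

lemma coef_eq_zero_if_less: "i < k \<Longrightarrow> coef i k a = \<zero>"
  by (induction i arbitrary: k) auto

lemma coef_one: "coef i k \<one> = (if k = i then \<one> else \<zero>)"
  by (induction i arbitrary: k) auto

lemma w_coef_ge: "a \<in> carrier R \<Longrightarrow> ereal B \<le> w a \<Longrightarrow> ereal (B + real i - real k) \<le> w (coef i k a)"
proof (induction i arbitrary: k)
  case 0 then show ?case by (cases k) auto
next
  case (Suc i)
  have t1: "ereal (B + real (Suc i) - real k) \<le> w (if k = 0 then \<zero> else \<sigma> (coef i (k - 1) a))"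
  proof (cases k)
    case (Suc k')
    have "ereal (B + real i - real k') \<le> w (\<sigma> (coef i k' a))"
      using Suc.IH Suc.prems by (intro w_sigma_ge) auto
    then show ?thesis using Suc by (simp add: add_diff_eq)
  qed simp
  have "ereal (B + real i - real k + 1) \<le> w (\<delta> (coef i k a))"
    using Suc.IH Suc.prems by (intro w_delta_ge) auto
  then have t2: "ereal (B + real (Suc i) - real k) \<le> w (\<delta> (coef i k a))" by (simp add: algebra_simps)
  show ?case using t1 t2 Suc.prems by (simp only: skw_coef.simps) (intro w_add_ge, auto)
qed

end

section \<open>The ring of bounded skew power series\<close>

lemma tendsto_PInf_iff_eventually_ge:
  fixes v :: "'b \<Rightarrow> ereal"
  shows "((\<lambda>n. v (r n) + ereal (real n / 2)) \<longlongrightarrow> \<infinity>) sequentially \<longleftrightarrow>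
    (\<forall>N::real. \<exists>M. \<forall>n\<ge>M. ereal (N - real n / 2) \<le> v (r n))"
proof -
  have e: "ereal N < v (r n) + ereal (real n / 2) \<longleftrightarrow> ereal (N - real n / 2) < v (r n)" for N n
    by (cases "v (r n)") auto
  show ?thesis
    unfolding tendsto_PInfty eventually_sequentially
  proof
    assume a: "\<forall>N. \<exists>M. \<forall>n\<ge>M. ereal N < v (r n) + ereal (real n / 2)"
    show "\<forall>N::real. \<exists>M. \<forall>n\<ge>M. ereal (N - real n / 2) \<le> v (r n)"
    proof
      fix N :: real
      obtain M where "\<forall>n\<ge>M. ereal N < v (r n) + ereal (real n / 2)" using a by blast
      then show "\<exists>M. \<forall>n\<ge>M. ereal (N - real n / 2) \<le> v (r n)" using e by (meson less_imp_le)
    qed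
  next
    assume a: "\<forall>N::real. \<exists>M. \<forall>n\<ge>M. ereal (N - real n / 2) \<le> v (r n)"
    show "\<forall>N. \<exists>M. \<forall>n\<ge>M. ereal N < v (r n) + ereal (real n / 2)"
    proof
      fix N :: real
      obtain M where M: "\<forall>n\<ge>M. ereal (N + 1 - real n / 2) \<le> v (r n)" using a by blast
      have "ereal N < v (r n) + ereal (real n / 2)" if "n \<ge> M" for n
      proof -
        have "ereal (N - real n / 2) < ereal (N + 1 - real n / 2)" by simp
        also have "\<dots> \<le> v (r n)" using M that by blast
        finally show ?thesis using e by blast
      qed
      then show "\<exists>M. \<forall>n\<ge>M. ereal N < v (r n) + ereal (real n / 2)" by blast
    qed
  qed
qed

lemma ps_filt_ge_iff: "ereal N \<le> ps_filt v r \<longleftrightarrow> (\<forall>n. ereal (N - real n / 2) \<le> v (r n))"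
proof -
  have "ereal N \<le> v (r n) + ereal (real n / 2) \<longleftrightarrow> ereal (N - real n / 2) \<le> v (r n)" for n
    by (cases "v (r n)") auto
  then show ?thesis unfolding ps_filt_def le_INF_iff by simp
qed

context skew_filtered_ring
begin

abbreviation S where "S \<equiv> skew_ps R w \<sigma> \<delta>"

definition coeff_growth :: "(nat \<Rightarrow> 'a) \<Rightarrow> bool" where
  "coeff_growth r \<longleftrightarrow> (\<forall>N::real. \<exists>M. \<forall>n\<ge>M. ereal (N - real n / 2) \<le> w (r n))"

text \<open>Since x^i a = \<Sum>k. skw_coef i k a x^k, the term u_i x^i v_j x^j contributes
  mult_term u v n j i to the coefficient of x^n.\<close>

definition mult_term :: "(nat \<Rightarrow> 'a) \<Rightarrow> (nat \<Rightarrow> 'a) \<Rightarrow> nat \<Rightarrow> nat \<Rightarrow> nat \<Rightarrow> 'a" where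
  "mult_term u v n j i = u i \<otimes> coef i (n - j) (v j)"

definition ps_mult :: "(nat \<Rightarrow> 'a) \<Rightarrow> (nat \<Rightarrow> 'a) \<Rightarrow> nat \<Rightarrow> 'a" where
  "ps_mult u v n = finsum R (\<lambda>j. fsum R w (mult_term u v n j)) {..n}"

definition xpow :: "nat \<Rightarrow> nat \<Rightarrow> 'a" where
  "xpow k = (\<lambda>n. if n = k then \<one> else \<zero>)"

lemma S_carrier: "carrier S = bseries R w"
  unfolding skew_ps_def by simp

lemma S_carrier_iff: "u \<in> carrier S \<longleftrightarrow> (\<forall>n. u n \<in> carrier R) \<and> coeff_growth u"
  unfolding S_carrier bseries_def coeff_growth_def using tendsto_PInf_iff_eventually_ge[of w u] by simp

lemma S_coeff_closed[simp]: "u \<in> carrier S \<Longrightarrow> u n \<in> carrier R"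
  using S_carrier_iff by blast

lemma S_add: "u \<oplus>\<^bsub>S\<^esub> v = (\<lambda>n. u n \<oplus> v n)"
  unfolding skew_ps_def by simp

lemma S_zero: "\<zero>\<^bsub>S\<^esub> = (\<lambda>n. \<zero>)"
  unfolding skew_ps_def by simp

lemma S_one: "\<one>\<^bsub>S\<^esub> = const_ps R \<one>"
  unfolding skew_ps_def const_ps_def by simp

lemma S_mult: "u \<otimes>\<^bsub>S\<^esub> v = ps_mult u v"
  unfolding skew_ps_def ps_mult_def mult_term_def by simp

lemma const_ps_closed: "a \<in> carrier R \<Longrightarrow> const_ps R a \<in> carrier S"
  unfolding S_carrier_iff coeff_growth_def const_ps_def by (auto intro!: exI[of _ 1])

lemma xpow_closed: "xpow k \<in> carrier S"
  unfolding S_carrier_iff coeff_growth_def xpow_def by (intro conjI allI exI[of _ "Suc k"]) auto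

lemma xpow_0: "xpow 0 = const_ps R \<one>"
  unfolding xpow_def const_ps_def by simp

lemma ps_filt_lower_bound:
  assumes "u \<in> carrier S"
  shows "\<exists>B. ereal B \<le> ps_filt w u"
proof -
  obtain M where M: "\<forall>n\<ge>M. ereal (0 - real n / 2) \<le> w (u n)"
    using assms unfolding S_carrier_iff coeff_growth_def by blast
  have "\<exists>b. ereal (b - real n / 2) \<le> w (u n)" for n
  proof -
    obtain B where "ereal B \<le> w (u n)" using w_real_lower_bound[OF S_coeff_closed[OF assms]] by blast
    then show ?thesis by (intro exI[of _ "B + real n / 2"]) simp
  qed
  then obtain b where b: "\<And>n. ereal (b n - real n / 2) \<le> w (u n)" by metis
  define B where "B = Min (insert 0 (b ` {..<M}))"
  have "ereal (B - real n / 2) \<le> w (u n)" for n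
  proof (cases "n < M")
    case True
    then have "B \<le> b n" unfolding B_def by (intro Min_le) auto
    then have "ereal (B - real n / 2) \<le> ereal (b n - real n / 2)" by simp
    then show ?thesis using b[of n] by (rule order.trans)
  next
    case False
    have "B \<le> 0" unfolding B_def by (intro Min_le) auto
    then have "ereal (B - real n / 2) \<le> ereal (0 - real n / 2)" by simp
    then show ?thesis using M False by (meson order.trans not_less)
  qed
  then show ?thesis unfolding ps_filt_ge_iff by blast
qed

lemma mult_term_closed[simp]: "u i \<in> carrier R \<Longrightarrow> v j \<in> carrier R \<Longrightarrow> mult_term u v n j i \<in> carrier R"
  unfolding mult_term_def by simp

lemma mult_term_eq_zero: "u i \<in> carrier R \<Longrightarrow> i + j < n \<Longrightarrow> mult_term u v n j i = \<zero>"
  unfolding mult_term_def by (simp add: coef_eq_zero_if_less)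

lemma w_mult_term_ge:
  assumes "u i \<in> carrier R" "v j \<in> carrier R" "ereal (P - real i / 2) \<le> w (u i)"
    "ereal (Q - real j / 2) \<le> w (v j)" "j \<le> n"
  shows "ereal (P + Q + (real i + real j) / 2 - real n) \<le> w (mult_term u v n j i)"
proof -
  have "ereal (Q - real j / 2 + real i - real (n - j)) \<le> w (coef i (n - j) (v j))"
    using assms by (intro w_coef_ge) auto
  then have "ereal ((P - real i / 2) + (Q - real j / 2 + real i - real (n - j))) \<le> w (mult_term u v n j i)"
    unfolding mult_term_def using assms by (intro w_mult_ge) auto
  moreover have "(P - real i / 2) + (Q - real j / 2 + real i - real (n - j))
      = P + Q + (real i + real j) / 2 - real n"
    using assms(5) by (simp add: of_nat_diff field_simps)
  ultimately show ?thesis by simp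
qed

lemma tends_to_zero_mult_term:
  assumes "u \<in> carrier S" "v \<in> carrier S" "j \<le> n"
  shows "tends_to_zero (mult_term u v n j)"
  unfolding tends_to_zero_def
proof
  fix N :: real
  obtain A B where AB: "ereal A \<le> ps_filt w u" "ereal B \<le> ps_filt w v"
    using ps_filt_lower_bound assms by metis
  obtain M :: nat where M: "real M \<ge> 2 * (N - A - B + real n)" by (meson real_arch_simple)
  have "ereal N \<le> w (mult_term u v n j i)" if "i \<ge> M" for i
  proof -
    have "ereal (A + B + (real i + real j) / 2 - real n) \<le> w (mult_term u v n j i)"
      using assms AB unfolding ps_filt_ge_iff by (intro w_mult_term_ge) auto
    moreover have "N \<le> A + B + (real i + real j) / 2 - real n"
      using M of_nat_mono[OF that, where 'a=real] by (simp add: field_simps)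
    ultimately show ?thesis by (rule ereal_le_weaken)
  qed
  then show "\<exists>M. \<forall>i\<ge>M. ereal N \<le> w (mult_term u v n j i)" by blast
qed

lemma fsum_mult_term_closed:
  "u \<in> carrier S \<Longrightarrow> v \<in> carrier S \<Longrightarrow> j \<le> n \<Longrightarrow> fsum R w (mult_term u v n j) \<in> carrier R"
  by (intro fsum_closed tends_to_zero_mult_term) auto

lemma ps_mult_coeff_closed: "u \<in> carrier S \<Longrightarrow> v \<in> carrier S \<Longrightarrow> ps_mult u v n \<in> carrier R"
  unfolding ps_mult_def by (intro finsum_closed) (auto intro!: fsum_mult_term_closed)

lemma w_ps_mult_ge:
  assumes "u \<in> carrier S" "v \<in> carrier S"
    "\<And>i j. i + j \<ge> n \<Longrightarrow> j \<le> n \<Longrightarrow> ereal b \<le> w (mult_term u v n j i)"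
  shows "ereal b \<le> w (ps_mult u v n)"
  unfolding ps_mult_def
proof (intro w_finsum_ge w_fsum_ge)
  fix i j assume "j \<in> {..n}"
  then show "ereal b \<le> w (mult_term u v n j i)"
    using assms by (cases "i + j < n") (auto simp: mult_term_eq_zero)
qed (use assms in \<open>auto intro!: fsum_mult_term_closed tends_to_zero_mult_term\<close>)

lemma ps_filt_ps_mult_ge:
  assumes "u \<in> carrier S" "v \<in> carrier S" "ereal A \<le> ps_filt w u" "ereal B \<le> ps_filt w v"
  shows "ereal (A + B) \<le> ps_filt w (ps_mult u v)"
  unfolding ps_filt_ge_iff
proof
  fix n
  show "ereal (A + B - real n / 2) \<le> w (ps_mult u v n)"
  proof (rule w_ps_mult_ge[OF assms(1,2)])
    fix i j assume "n \<le> i + j" "j \<le> n"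
    then have "ereal (A + B + (real i + real j) / 2 - real n) \<le> w (mult_term u v n j i)"
      using assms unfolding ps_filt_ge_iff by (intro w_mult_term_ge) auto
    moreover have "A + B - real n / 2 \<le> A + B + (real i + real j) / 2 - real n"
      using \<open>n \<le> i + j\<close> by (simp add: field_simps)
    ultimately show "ereal (A + B - real n / 2) \<le> w (mult_term u v n j i)"
      by (rule ereal_le_weaken)
  qed
qed

text \<open>A term of a coefficient of uv of high degree n has i or j at least n/2, and then the factor
  with the large index has large filtration by the growth condition.\<close>

lemma coeff_growth_ps_mult:
  assumes u: "u \<in> carrier S" and v: "v \<in> carrier S"
  shows "coeff_growth (ps_mult u v)"
  unfolding coeff_growth_def
proof
  fix N :: real
  obtain A B where AB: "ereal A \<le> ps_filt w u" "ereal B \<le> ps_filt w v"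
    using ps_filt_lower_bound u v by metis
  obtain M1 where M1: "\<forall>i\<ge>M1. ereal ((N - B) - real i / 2) \<le> w (u i)"
    using u unfolding S_carrier_iff coeff_growth_def by blast
  obtain M2 where M2: "\<forall>j\<ge>M2. ereal ((N - A) - real j / 2) \<le> w (v j)"
    using v unfolding S_carrier_iff coeff_growth_def by blast
  have "ereal (N - real n / 2) \<le> w (ps_mult u v n)" if n: "n \<ge> 2 * (M1 + M2)" for n
  proof (rule w_ps_mult_ge[OF u v])
    fix i j assume ij: "n \<le> i + j" "j \<le> n"
    have le: "N - real n / 2 \<le> N + (real i + real j) / 2 - real n"
      using ij by (simp add: field_simps)
    have "ereal (N + (real i + real j) / 2 - real n) \<le> w (mult_term u v n j i)"
    proof (cases "i \<ge> M1")
      case True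
      then show ?thesis
        using w_mult_term_ge[of u i v j "N - B" B n] u v ij M1 AB(2) unfolding ps_filt_ge_iff by auto
    next
      case False
      then have "j \<ge> M2" using ij n by presburger
      then show ?thesis
        using w_mult_term_ge[of u i v j A "N - A" n] u v ij M2 AB(1) unfolding ps_filt_ge_iff by auto
    qed
    then show "ereal (N - real n / 2) \<le> w (mult_term u v n j i)"
      using le by (rule ereal_le_weaken)
  qed
  then show "\<exists>M. \<forall>n\<ge>M. ereal (N - real n / 2) \<le> w (ps_mult u v n)" by blast
qed

lemma ps_mult_closed: "u \<in> carrier S \<Longrightarrow> v \<in> carrier S \<Longrightarrow> ps_mult u v \<in> carrier S"
  unfolding S_carrier_iff[of "ps_mult u v"] by (auto intro!: coeff_growth_ps_mult ps_mult_coeff_closed)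

lemma S_add_closed: "u \<in> carrier S \<Longrightarrow> v \<in> carrier S \<Longrightarrow> (\<lambda>n. u n \<oplus> v n) \<in> carrier S"
proof -
  assume uv: "u \<in> carrier S" "v \<in> carrier S"
  have "coeff_growth (\<lambda>n. u n \<oplus> v n)" unfolding coeff_growth_def
  proof
    fix N :: real
    obtain M1 M2 where "\<forall>n\<ge>M1. ereal (N - real n / 2) \<le> w (u n)" "\<forall>n\<ge>M2. ereal (N - real n / 2) \<le> w (v n)"
      using uv unfolding S_carrier_iff coeff_growth_def by meson
    then show "\<exists>M. \<forall>n\<ge>M. ereal (N - real n / 2) \<le> w (u n \<oplus> v n)"
      using uv by (intro exI[of _ "max M1 M2"]) (auto intro!: w_add_ge)
  qed
  then show ?thesis using uv unfolding S_carrier_iff by auto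
qed

lemma S_neg_closed: "u \<in> carrier S \<Longrightarrow> (\<lambda>n. \<ominus> u n) \<in> carrier S"
  unfolding S_carrier_iff coeff_growth_def by simp

lemma S_abelian_group: "abelian_group S"
proof (rule abelian_groupI, goal_cases)
  case (1 x y) then show ?case unfolding S_add by (rule S_add_closed)
next
  case 2 then show ?case unfolding S_zero using const_ps_closed[of \<zero>] by (simp add: const_ps_def)
next
  case (3 x y z) then show ?case unfolding S_add by (auto simp: a_assoc)
next
  case (4 x y) then show ?case unfolding S_add by (auto simp: a_comm)
next
  case (5 x) then show ?case unfolding S_add S_zero by auto
next
  case (6 x)
  then have "(\<lambda>n. \<ominus> x n) \<oplus>\<^bsub>S\<^esub> x = \<zero>\<^bsub>S\<^esub>" unfolding S_add S_zero by (auto simp: l_neg)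
  then show ?case using S_neg_closed[OF 6] by blast
qed

lemma ps_mult_add_left:
  assumes "u \<in> carrier S" "v \<in> carrier S" "t \<in> carrier S"
  shows "ps_mult (\<lambda>n. u n \<oplus> v n) t = (\<lambda>n. ps_mult u t n \<oplus> ps_mult v t n)"
proof
  fix n
  have "fsum R w (mult_term (\<lambda>n. u n \<oplus> v n) t n j)
      = fsum R w (mult_term u t n j) \<oplus> fsum R w (mult_term v t n j)" if "j \<le> n" for j
  proof -
    have "mult_term (\<lambda>n. u n \<oplus> v n) t n j = (\<lambda>i. mult_term u t n j i \<oplus> mult_term v t n j i)"
      unfolding mult_term_def using assms by (auto simp: l_distr)
    then show ?thesis using assms that by (simp add: fsum_add tends_to_zero_mult_term)
  qed
  then have "ps_mult (\<lambda>n. u n \<oplus> v n) t n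
      = finsum R (\<lambda>j. fsum R w (mult_term u t n j) \<oplus> fsum R w (mult_term v t n j)) {..n}"
    unfolding ps_mult_def using assms S_add_closed[OF assms(1,2)]
    by (intro finsum_cong) (auto intro!: fsum_mult_term_closed)
  also have "\<dots> = ps_mult u t n \<oplus> ps_mult v t n"
    unfolding ps_mult_def using assms by (intro finsum_addf) (auto intro!: fsum_mult_term_closed)
  finally show "ps_mult (\<lambda>n. u n \<oplus> v n) t n = ps_mult u t n \<oplus> ps_mult v t n" .
qed

lemma ps_mult_add_right:
  assumes "u \<in> carrier S" "v \<in> carrier S" "t \<in> carrier S"
  shows "ps_mult t (\<lambda>n. u n \<oplus> v n) = (\<lambda>n. ps_mult t u n \<oplus> ps_mult t v n)"
proof
  fix n
  have "fsum R w (mult_term t (\<lambda>n. u n \<oplus> v n) n j)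
      = fsum R w (mult_term t u n j) \<oplus> fsum R w (mult_term t v n j)" if "j \<le> n" for j
  proof -
    have "mult_term t (\<lambda>n. u n \<oplus> v n) n j = (\<lambda>i. mult_term t u n j i \<oplus> mult_term t v n j i)"
      unfolding mult_term_def using assms by (auto simp: r_distr coef_add)
    then show ?thesis using assms that by (simp add: fsum_add tends_to_zero_mult_term)
  qed
  then have "ps_mult t (\<lambda>n. u n \<oplus> v n) n
      = finsum R (\<lambda>j. fsum R w (mult_term t u n j) \<oplus> fsum R w (mult_term t v n j)) {..n}"
    unfolding ps_mult_def using assms S_add_closed[OF assms(1,2)]
    by (intro finsum_cong) (auto intro!: fsum_mult_term_closed)
  also have "\<dots> = ps_mult t u n \<oplus> ps_mult t v n"
    unfolding ps_mult_def using assms by (intro finsum_addf) (auto intro!: fsum_mult_term_closed)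
  finally show "ps_mult t (\<lambda>n. u n \<oplus> v n) n = ps_mult t u n \<oplus> ps_mult t v n" .
qed

lemma ps_mult_const_left:
  assumes "a \<in> carrier R" "v \<in> carrier S"
  shows "ps_mult (const_ps R a) v = (\<lambda>n. a \<otimes> v n)"
proof
  fix n
  have "fsum R w (mult_term (const_ps R a) v n j) = (if j = n then a \<otimes> v n else \<zero>)" if "j \<le> n" for j
  proof -
    have "mult_term (const_ps R a) v n j = (\<lambda>i. if i = 0 then (if j = n then a \<otimes> v n else \<zero>) else \<zero>)"
      unfolding mult_term_def const_ps_def using assms that by auto
    then show ?thesis using assms by (simp add: fsum_single)
  qed
  then show "ps_mult (const_ps R a) v n = a \<otimes> v n"
    unfolding ps_mult_def using assms by (simp add: finsum_indicator cong: finsum_cong)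
qed

lemma ps_mult_one_right:
  assumes "u \<in> carrier S"
  shows "ps_mult u (const_ps R \<one>) = u"
proof
  fix n
  have "fsum R w (mult_term u (const_ps R \<one>) n j) = (if j = 0 then u n else \<zero>)" for j
  proof -
    have "mult_term u (const_ps R \<one>) n j = (\<lambda>i. if i = n \<and> j = 0 then u n else \<zero>)"
      unfolding mult_term_def const_ps_def using assms by (auto simp: coef_one)
    then show ?thesis using assms fsum_single[of "u n" n] by auto
  qed
  then show "ps_mult u (const_ps R \<one>) n = u n"
    unfolding ps_mult_def using assms by (simp add: finsum_indicator cong: finsum_cong)
qed

lemma scale_closed: "a \<in> carrier R \<Longrightarrow> v \<in> carrier S \<Longrightarrow> (\<lambda>n. a \<otimes> v n) \<in> carrier S"
  using ps_mult_const_left[of a v] ps_mult_closed[OF const_ps_closed] by metis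

lemma ps_mult_scale_left:
  assumes "a \<in> carrier R" "v \<in> carrier S" "t \<in> carrier S"
  shows "ps_mult (\<lambda>n. a \<otimes> v n) t = (\<lambda>n. a \<otimes> ps_mult v t n)"
proof
  fix n
  have "fsum R w (mult_term (\<lambda>n. a \<otimes> v n) t n j) = a \<otimes> fsum R w (mult_term v t n j)" if "j \<le> n" for j
  proof -
    have "mult_term (\<lambda>n. a \<otimes> v n) t n j = (\<lambda>i. a \<otimes> mult_term v t n j i)"
      unfolding mult_term_def using assms by (auto simp: m_assoc)
    then show ?thesis using assms that by (simp add: fsum_left_mult tends_to_zero_mult_term)
  qed
  then have "ps_mult (\<lambda>n. a \<otimes> v n) t n = finsum R (\<lambda>j. a \<otimes> fsum R w (mult_term v t n j)) {..n}"
    unfolding ps_mult_def using assms by (intro finsum_cong) (auto intro!: fsum_mult_term_closed scale_closed)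
  also have "\<dots> = a \<otimes> ps_mult v t n"
    unfolding ps_mult_def using assms by (intro finsum_rdistr[symmetric]) (auto intro!: fsum_mult_term_closed)
  finally show "ps_mult (\<lambda>n. a \<otimes> v n) t n = a \<otimes> ps_mult v t n" .
qed

text \<open>This is x a = \<sigma>(a) x + \<delta>(a), applied to each coefficient.\<close>

lemma ps_mult_x:
  assumes "v \<in> carrier S"
  shows "ps_mult (xpow 1) v = (\<lambda>n. \<delta> (v n) \<oplus> (if n = 0 then \<zero> else \<sigma> (v (n - 1))))"
proof
  fix n
  let ?d = "\<lambda>j. if j = n then \<delta> (v n) else \<zero>"
  let ?s = "\<lambda>j. if n \<noteq> 0 \<and> j = n - 1 then \<sigma> (v (n - 1)) else \<zero>"
  have "fsum R w (mult_term (xpow 1) v n j) = coef 1 (n - j) (v j)" for j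
  proof -
    have "mult_term (xpow 1) v n j = (\<lambda>i. if i = 1 then coef 1 (n - j) (v j) else \<zero>)"
      unfolding mult_term_def xpow_def using assms by auto
    then show ?thesis using assms by (simp add: fsum_single del: skw_coef.simps)
  qed
  also have "coef 1 (n - j) (v j) = ?d j \<oplus> ?s j" if "j \<le> n" for j
    using assms that by auto
  finally have "ps_mult (xpow 1) v n = finsum R (\<lambda>j. ?d j \<oplus> ?s j) {..n}"
    unfolding ps_mult_def using assms by (intro finsum_cong) auto
  also have "\<dots> = finsum R ?d {..n} \<oplus> finsum R ?s {..n}"
    using assms by (intro finsum_addf) auto
  also have "\<dots> = \<delta> (v n) \<oplus> (if n = 0 then \<zero> else \<sigma> (v (n - 1)))"
    using assms finsum_indicator[of n "{..n}" "\<delta> (v n)"] finsum_indicator[of "n - 1" "{..n}" "\<sigma> (v (n - 1))"]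
    by (cases "n = 0") auto
  finally show "ps_mult (xpow 1) v n = \<delta> (v n) \<oplus> (if n = 0 then \<zero> else \<sigma> (v (n - 1)))" .
qed

lemma xpow_Suc: "xpow (Suc k) = ps_mult (xpow 1) (xpow k)"
  unfolding ps_mult_x[OF xpow_closed] by (rule ext) (auto simp: xpow_def)

end

context skew_filtered_ring
begin

lemma w_series_variants_ge:
  assumes v: "v \<in> carrier S" and B: "ereal B \<le> ps_filt w v"
  shows "ereal (B - real i / 2) \<le> w (v i)" "ereal (B - real i / 2) \<le> w (\<delta> (v i))"
    "ereal (B - real i / 2) \<le> w (\<sigma> (v i))"
    "ereal (B - real i / 2) \<le> w (if i = 0 then \<zero> else \<sigma> (v (i - 1)))"
proof -
  have wv: "ereal (B - real j / 2) \<le> w (v j)" for j using B unfolding ps_filt_ge_iff by blast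
  then show "ereal (B - real i / 2) \<le> w (v i)" .
  show "ereal (B - real i / 2) \<le> w (\<delta> (v i))"
    by (rule ereal_le_weaken[OF w_delta_ge[OF S_coeff_closed[OF v] wv]]) simp
  show "ereal (B - real i / 2) \<le> w (\<sigma> (v i))"
    using w_sigma_ge[OF S_coeff_closed[OF v] wv] .
  show "ereal (B - real i / 2) \<le> w (if i = 0 then \<zero> else \<sigma> (v (i - 1)))"
    by (cases i) (auto intro: ereal_le_weaken[OF w_sigma_ge[OF S_coeff_closed[OF v] wv]])
qed

lemma w_coef_variants_ge:
  assumes a: "a \<in> carrier R" and Q: "ereal Q \<le> w a"
  shows "ereal (Q - real k + real i) \<le> w (coef i k a)"
    "ereal (Q - real k + real i) \<le> w (coef i (k - 1) a)"
    "ereal (Q - real k + real i) \<le> w (coef (Suc i) k a)"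
    "ereal (Q - real k + real i) \<le> w (\<delta> (coef i k a))"
    "ereal (Q - real k + real i) \<le> w (if k = 0 then \<zero> else \<sigma> (coef i (k - 1) a))"
proof -
  have wc: "ereal (Q - real l + real j) \<le> w (coef j l a)" for j l
    by (rule ereal_le_weaken[OF w_coef_ge[OF a Q]]) simp
  then show "ereal (Q - real k + real i) \<le> w (coef i k a)" .
  show wc': "ereal (Q - real k + real i) \<le> w (coef i (k - 1) a)"
    by (rule ereal_le_weaken[OF wc]) (cases k; simp)
  show "ereal (Q - real k + real i) \<le> w (coef (Suc i) k a)"
    by (rule ereal_le_weaken[OF wc]) simp
  show "ereal (Q - real k + real i) \<le> w (\<delta> (coef i k a))"
    by (rule ereal_le_weaken[OF w_delta_ge[OF coef_closed[OF a] wc]]) simp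
  show "ereal (Q - real k + real i) \<le> w (if k = 0 then \<zero> else \<sigma> (coef i (k - 1) a))"
    using w_sigma_ge[OF coef_closed[OF a] wc'] by simp
qed

context
  fixes v :: "nat \<Rightarrow> 'a" and a :: 'a and B Q :: real and k :: nat
  assumes v: "v \<in> carrier S" and B: "ereal B \<le> ps_filt w v"
    and a: "a \<in> carrier R" and Q: "ereal Q \<le> w a"
begin

private lemmas wv = w_series_variants_ge[OF v B] and wc = w_coef_variants_ge[OF a Q]
  and null = tends_to_zero_mult[where P = B and Q = "Q - real k"]

private lemma vc: "v i \<in> carrier R"
  using v by simp

lemma delta_fsum_mult_coef:
  "\<delta> (fsum R w (\<lambda>i. v i \<otimes> coef i k a))
    = fsum R w (\<lambda>i. \<delta> (v i) \<otimes> coef i k a) \<oplus> fsum R w (\<lambda>i. \<sigma> (v i) \<otimes> \<delta> (coef i k a))"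
proof -
  have "\<delta> (fsum R w (\<lambda>i. v i \<otimes> coef i k a)) = fsum R w (\<lambda>i. \<delta> (v i \<otimes> coef i k a))"
    using vc a by (simp add: fsum_delta null wv wc del: skw_coef.simps)
  also have "(\<lambda>i. \<delta> (v i \<otimes> coef i k a)) = (\<lambda>i. \<delta> (v i) \<otimes> coef i k a \<oplus> \<sigma> (v i) \<otimes> \<delta> (coef i k a))"
    using vc a by (simp add: delta_mult)
  finally show ?thesis using vc a by (simp add: fsum_add null wv wc del: skw_coef.simps)
qed

lemma fsum_sigma_mult_coef:
  "fsum R w (\<lambda>i. \<sigma> (v i) \<otimes> (if k = 0 then \<zero> else \<sigma> (coef i (k - 1) a)))
    = (if k = 0 then \<zero> else \<sigma> (fsum R w (\<lambda>i. v i \<otimes> coef i (k - 1) a)))"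
proof (cases "k = 0")
  case False
  have "tends_to_zero (\<lambda>i. v i \<otimes> coef i (k - 1) a)"
    using vc a by (intro null wv(1) wc(2)) auto
  then have "\<sigma> (fsum R w (\<lambda>i. v i \<otimes> coef i (k - 1) a)) = fsum R w (\<lambda>i. \<sigma> (v i \<otimes> coef i (k - 1) a))"
    using fsum_sigma(1)[of "\<lambda>i. v i \<otimes> coef i (k - 1) a"] vc a by simp
  then show ?thesis using False vc a by (simp add: sigma_mult del: skw_coef.simps)
qed (simp add: vc)

text \<open>The shift comes from x v, and coef (Suc i) is expanded by the recursion of skw_coef.\<close>

lemma fsum_shift_mult_coef:
  "fsum R w (\<lambda>i. (if i = 0 then \<zero> else \<sigma> (v (i - 1))) \<otimes> coef i k a)
    = fsum R w (\<lambda>i. \<sigma> (v i) \<otimes> (if k = 0 then \<zero> else \<sigma> (coef i (k - 1) a)))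
      \<oplus> fsum R w (\<lambda>i. \<sigma> (v i) \<otimes> \<delta> (coef i k a))"
proof -
  have "(\<lambda>i. (if i = 0 then \<zero> else \<sigma> (v (i - 1))) \<otimes> coef i k a)
      = (\<lambda>i. if i = 0 then \<zero> else (\<lambda>i. \<sigma> (v i) \<otimes> coef (Suc i) k a) (i - 1))"
    using vc a by (auto simp del: skw_coef.simps)
  moreover have "tends_to_zero (\<lambda>i. \<sigma> (v i) \<otimes> coef (Suc i) k a)"
    using vc a by (intro null wv(3) wc(3)) (auto simp del: skw_coef.simps)
  ultimately have "fsum R w (\<lambda>i. (if i = 0 then \<zero> else \<sigma> (v (i - 1))) \<otimes> coef i k a)
      = fsum R w (\<lambda>i. \<sigma> (v i) \<otimes> coef (Suc i) k a)"
    using fsum_shift(1)[of "\<lambda>i. \<sigma> (v i) \<otimes> coef (Suc i) k a"] vc a by simp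
  also have "(\<lambda>i. \<sigma> (v i) \<otimes> coef (Suc i) k a)
      = (\<lambda>i. \<sigma> (v i) \<otimes> (if k = 0 then \<zero> else \<sigma> (coef i (k - 1) a)) \<oplus> \<sigma> (v i) \<otimes> \<delta> (coef i k a))"
    using vc a by (auto simp: r_distr)
  finally show ?thesis using vc a by (simp add: fsum_add null wv wc del: skw_coef.simps)
qed

text \<open>The identity (x v) a = x (v a) for a series v and a scalar a, compared coefficientwise.\<close>

lemma fsum_x_mult_coef_given_bounds:
  "fsum R w (\<lambda>i. ps_mult (xpow 1) v i \<otimes> coef i k a)
    = \<delta> (fsum R w (\<lambda>i. v i \<otimes> coef i k a))
      \<oplus> (if k = 0 then \<zero> else \<sigma> (fsum R w (\<lambda>i. v i \<otimes> coef i (k - 1) a)))"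
proof -
  define D where "D = fsum R w (\<lambda>i. \<delta> (v i) \<otimes> coef i k a)"
  define E where "E = fsum R w (\<lambda>i. \<sigma> (v i) \<otimes> \<delta> (coef i k a))"
  define F where "F = fsum R w (\<lambda>i. \<sigma> (v i) \<otimes> (if k = 0 then \<zero> else \<sigma> (coef i (k - 1) a)))"
  have closed: "D \<in> carrier R" "E \<in> carrier R" "F \<in> carrier R"
    unfolding D_def E_def F_def using vc a
    by (auto intro!: fsum_closed null wv wc simp del: skw_coef.simps)
  have "(\<lambda>i. ps_mult (xpow 1) v i \<otimes> coef i k a)
      = (\<lambda>i. \<delta> (v i) \<otimes> coef i k a \<oplus> (if i = 0 then \<zero> else \<sigma> (v (i - 1))) \<otimes> coef i k a)"
    unfolding ps_mult_x[OF v] using vc a by (auto simp: l_distr)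
  then have "fsum R w (\<lambda>i. ps_mult (xpow 1) v i \<otimes> coef i k a) = D \<oplus> (F \<oplus> E)"
    unfolding D_def E_def F_def using vc a fsum_shift_mult_coef
    by (simp add: fsum_add null wv wc del: skw_coef.simps)
  then show ?thesis
    using closed delta_fsum_mult_coef fsum_sigma_mult_coef unfolding D_def E_def F_def
    by (simp add: a_ac)
qed

end

lemma fsum_x_mult_coef:
  assumes v: "v \<in> carrier S" and a: "a \<in> carrier R"
  shows "fsum R w (\<lambda>i. ps_mult (xpow 1) v i \<otimes> coef i k a)
    = \<delta> (fsum R w (\<lambda>i. v i \<otimes> coef i k a))
      \<oplus> (if k = 0 then \<zero> else \<sigma> (fsum R w (\<lambda>i. v i \<otimes> coef i (k - 1) a)))"
proof -
  obtain B where "ereal B \<le> ps_filt w v" using ps_filt_lower_bound v by blast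
  moreover obtain Q where "ereal Q \<le> w a" using w_real_lower_bound a by blast
  ultimately show ?thesis using fsum_x_mult_coef_given_bounds v a by blast
qed

definition associates :: "(nat \<Rightarrow> 'a) \<Rightarrow> bool" where
  "associates u \<longleftrightarrow> u \<in> carrier S \<and>
     (\<forall>v\<in>carrier S. \<forall>t\<in>carrier S. ps_mult (ps_mult u v) t = ps_mult u (ps_mult v t))"

lemma associates_x: "associates (xpow 1)"
  unfolding associates_def
proof (intro conjI ballI ext)
  fix v t n assume v: "v \<in> carrier S" and t: "t \<in> carrier S"
  let ?F = "\<lambda>j. fsum R w (mult_term v t n j)"
  let ?G = "\<lambda>j. if j = n then \<zero> else \<sigma> (fsum R w (mult_term v t (n - 1) j))"
  have closed: "?F j \<in> carrier R" "?G j \<in> carrier R" if "j \<le> n" for j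
    using that v t by (auto intro!: sigma_closed fsum_mult_term_closed)
  have "fsum R w (mult_term (ps_mult (xpow 1) v) t n j) = \<delta> (?F j) \<oplus> ?G j" if "j \<le> n" for j
  proof -
    have "n - j - 1 = n - 1 - j" by simp
    then show ?thesis
      using fsum_x_mult_coef[OF v S_coeff_closed[OF t], of "n - j" j] that unfolding mult_term_def by auto
  qed
  then have "ps_mult (ps_mult (xpow 1) v) t n = finsum R (\<lambda>j. \<delta> (?F j) \<oplus> ?G j) {..n}"
    unfolding ps_mult_def[of "ps_mult (xpow 1) v"] using closed by (intro finsum_cong) auto
  also have "\<dots> = finsum R (\<lambda>j. \<delta> (?F j)) {..n} \<oplus> finsum R ?G {..n}"
    using closed by (intro finsum_addf) auto
  also have "finsum R (\<lambda>j. \<delta> (?F j)) {..n} = \<delta> (ps_mult v t n)"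
    unfolding ps_mult_def using closed by (intro additive_finsum[symmetric] delta_additive) auto
  also have "finsum R ?G {..n} = (if n = 0 then \<zero> else \<sigma> (ps_mult v t (n - 1)))"
  proof (cases n)
    case (Suc m)
    have "?G \<in> {..m} \<rightarrow> carrier R" "?G n \<in> carrier R"
      using Suc v t by (auto intro!: sigma_closed fsum_mult_term_closed)
    moreover have "{..n} = insert n {..m}" using Suc by auto
    ultimately have "finsum R ?G {..n} = finsum R ?G {..m}" using Suc by (simp add: finsum_insert)
    also have "\<dots> = finsum R (\<lambda>j. \<sigma> (fsum R w (mult_term v t m j))) {..m}"
      using Suc v t by (intro finsum_cong) (auto intro!: sigma_closed fsum_mult_term_closed)
    also have "\<dots> = \<sigma> (ps_mult v t m)"
      unfolding ps_mult_def using v t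
      by (intro additive_finsum[symmetric] sigma_additive) (auto intro!: fsum_mult_term_closed)
    finally show ?thesis using Suc by simp
  qed simp
  finally show "ps_mult (ps_mult (xpow 1) v) t n = ps_mult (xpow 1) (ps_mult v t) n"
    unfolding ps_mult_x[OF ps_mult_closed[OF v t]] .
qed (rule xpow_closed)

lemma associates_const: "a \<in> carrier R \<Longrightarrow> associates (const_ps R a)"
  unfolding associates_def
  by (simp add: const_ps_closed ps_mult_const_left ps_mult_scale_left ps_mult_closed)

lemma associates_add:
  assumes "associates u" "associates u'"
  shows "associates (\<lambda>n. u n \<oplus> u' n)"
  unfolding associates_def
proof (intro conjI ballI)
  have u: "u \<in> carrier S" "u' \<in> carrier S" using assms unfolding associates_def by auto
  then show "(\<lambda>n. u n \<oplus> u' n) \<in> carrier S" by (rule S_add_closed)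
  fix v t assume vt: "v \<in> carrier S" "t \<in> carrier S"
  have "ps_mult (ps_mult (\<lambda>n. u n \<oplus> u' n) v) t = (\<lambda>n. ps_mult (ps_mult u v) t n \<oplus> ps_mult (ps_mult u' v) t n)"
    using u vt by (simp add: ps_mult_add_left ps_mult_closed)
  also have "\<dots> = (\<lambda>n. ps_mult u (ps_mult v t) n \<oplus> ps_mult u' (ps_mult v t) n)"
    using assms vt unfolding associates_def by simp
  also have "\<dots> = ps_mult (\<lambda>n. u n \<oplus> u' n) (ps_mult v t)"
    using u vt by (simp add: ps_mult_add_left ps_mult_closed)
  finally show "ps_mult (ps_mult (\<lambda>n. u n \<oplus> u' n) v) t = ps_mult (\<lambda>n. u n \<oplus> u' n) (ps_mult v t)" .
qed

lemma associates_mult: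
  assumes "associates u" "associates u'"
  shows "associates (ps_mult u u')"
  using assms ps_mult_closed unfolding associates_def by simp

lemma associates_xpow: "associates (xpow k)"
proof (induction k)
  case 0 then show ?case unfolding xpow_0 by (simp add: associates_const)
next
  case (Suc k) then show ?case unfolding xpow_Suc by (intro associates_mult associates_x)
qed

definition ps_truncate :: "nat \<Rightarrow> (nat \<Rightarrow> 'a) \<Rightarrow> nat \<Rightarrow> 'a" where
  "ps_truncate N u = (\<lambda>n. if n < N then u n else \<zero>)"

lemma associates_ps_truncate: "u \<in> carrier S \<Longrightarrow> associates (ps_truncate N u)"
proof (induction N)
  case 0
  have "ps_truncate 0 u = const_ps R \<zero>" unfolding ps_truncate_def const_ps_def by auto
  then show ?case by (simp add: associates_const)
next
  case (Suc N)
  have "ps_truncate (Suc N) u n = ps_truncate N u n \<oplus> u N \<otimes> xpow N n" for n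
    using Suc.prems unfolding ps_truncate_def xpow_def by (cases "n < N"; cases "n = N") auto
  then have "ps_truncate (Suc N) u = (\<lambda>n. ps_truncate N u n \<oplus> ps_mult (const_ps R (u N)) (xpow N) n)"
    unfolding ps_mult_const_left[OF S_coeff_closed[OF Suc.prems] xpow_closed] by auto
  then show ?case
    using Suc by (simp add: associates_add associates_mult associates_const associates_xpow)
qed

lemma w_assoc_defect_ge:
  assumes S: "d \<in> carrier S" "v \<in> carrier S" "t \<in> carrier S"
    and bounds: "ereal A \<le> ps_filt w d" "ereal Bv \<le> ps_filt w v" "ereal Bt \<le> ps_filt w t"
      "ereal Bvt \<le> ps_filt w (ps_mult v t)"
  shows "ereal (A + min (Bv + Bt) Bvt - real n / 2)
    \<le> w (ps_mult (ps_mult d v) t n \<ominus> ps_mult d (ps_mult v t) n)"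
proof -
  have "ereal (A + Bv + Bt) \<le> ps_filt w (ps_mult (ps_mult d v) t)"
    using S bounds by (intro ps_filt_ps_mult_ge ps_mult_closed) auto
  then have "ereal (A + Bv + Bt - real n / 2) \<le> w (ps_mult (ps_mult d v) t n)"
    unfolding ps_filt_ge_iff by blast
  moreover have "ereal (A + Bvt) \<le> ps_filt w (ps_mult d (ps_mult v t))"
    using S bounds by (intro ps_filt_ps_mult_ge ps_mult_closed) auto
  then have "ereal (A + Bvt - real n / 2) \<le> w (ps_mult d (ps_mult v t) n)"
    unfolding ps_filt_ge_iff by blast
  moreover have "ereal (A + min (Bv + Bt) Bvt - real n / 2) \<le> ereal (A + Bv + Bt - real n / 2)"
    "ereal (A + min (Bv + Bt) Bvt - real n / 2) \<le> ereal (A + Bvt - real n / 2)"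
    by simp_all
  ultimately have "ereal (A + min (Bv + Bt) Bvt - real n / 2) \<le> w (ps_mult (ps_mult d v) t n)"
    "ereal (A + min (Bv + Bt) Bvt - real n / 2) \<le> w (ps_mult d (ps_mult v t) n)"
    by (meson order.trans)+
  then show ?thesis using S by (intro w_minus_ge ps_mult_coeff_closed ps_mult_closed)
qed

text \<open>Associativity for general u: split u into a polynomial truncation, for which it holds, and
  a tail of arbitrarily large filtration, whose defect is small by the previous lemma.\<close>

lemma ps_mult_assoc:
  assumes u: "u \<in> carrier S" and v: "v \<in> carrier S" and t: "t \<in> carrier S"
  shows "ps_mult (ps_mult u v) t = ps_mult u (ps_mult v t)"
proof
  fix n
  have vt: "ps_mult v t \<in> carrier S" using v t by (rule ps_mult_closed)
  obtain Bv Bt Bvt where B: "ereal Bv \<le> ps_filt w v" "ereal Bt \<le> ps_filt w t"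
    "ereal Bvt \<le> ps_filt w (ps_mult v t)"
    using ps_filt_lower_bound v t vt by metis
  let ?L = "ps_mult (ps_mult u v) t n" and ?R = "ps_mult u (ps_mult v t) n"
  have "ereal Y \<le> w (?L \<ominus> ?R)" for Y
  proof -
    define A where "A = Y - min (Bv + Bt) Bvt + real n / 2"
    obtain M where M: "\<forall>n\<ge>M. ereal (A - real n / 2) \<le> w (u n)"
      using u unfolding S_carrier_iff coeff_growth_def by blast
    define d where "d = (\<lambda>n. if n < M then \<zero> else u n)"
    have "w (u n) \<le> w (d n)" for n unfolding d_def by simp
    then have "coeff_growth d" using u unfolding S_carrier_iff coeff_growth_def by (meson order.trans)
    then have dS: "d \<in> carrier S" using u unfolding S_carrier_iff d_def by simp
    have dA: "ereal A \<le> ps_filt w d" unfolding ps_filt_ge_iff d_def using M by simp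
    have TS: "ps_truncate M u \<in> carrier S"
      and T: "ps_mult (ps_mult (ps_truncate M u) v) t = ps_mult (ps_truncate M u) (ps_mult v t)"
      using associates_ps_truncate[OF u] v t unfolding associates_def by auto
    have ud: "u = (\<lambda>n. d n \<oplus> ps_truncate M u n)" unfolding d_def ps_truncate_def using u by auto
    have eL: "?L = ps_mult (ps_mult d v) t n \<oplus> ps_mult (ps_mult (ps_truncate M u) v) t n"
      by (subst ud, simp only: ps_mult_add_left[OF dS TS v]
          ps_mult_add_left[OF ps_mult_closed[OF dS v] ps_mult_closed[OF TS v] t])
    have eR: "?R = ps_mult d (ps_mult v t) n \<oplus> ps_mult (ps_truncate M u) (ps_mult v t) n"
      by (subst ud, simp only: ps_mult_add_left[OF dS TS vt])
    have "ps_mult (ps_mult d v) t n \<in> carrier R" "ps_mult d (ps_mult v t) n \<in> carrier R"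
      "ps_mult (ps_truncate M u) (ps_mult v t) n \<in> carrier R"
      using dS TS v t vt by (auto intro!: ps_mult_coeff_closed ps_mult_closed)
    then have "?L \<ominus> ?R = ps_mult (ps_mult d v) t n \<ominus> ps_mult d (ps_mult v t) n"
      unfolding eL eR T by algebra
    moreover have "Y = A + min (Bv + Bt) Bvt - real n / 2" unfolding A_def by simp
    ultimately show ?thesis using w_assoc_defect_ge[OF dS v t dA B] by simp
  qed
  moreover have "?L \<in> carrier R" "?R \<in> carrier R"
    using u v t vt by (auto intro!: ps_mult_coeff_closed ps_mult_closed)
  ultimately show "?L = ?R" using zero_if_w_unbounded[of "?L \<ominus> ?R"] by simp
qed

lemma S_ring: "ring S"
proof (rule ringI)
  show "abelian_group S" by (rule S_abelian_group)
  show "monoid S"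
  proof (rule monoidI)
    show "\<And>x y. x \<in> carrier S \<Longrightarrow> y \<in> carrier S \<Longrightarrow> x \<otimes>\<^bsub>S\<^esub> y \<in> carrier S"
      unfolding S_mult by (rule ps_mult_closed)
    show "\<one>\<^bsub>S\<^esub> \<in> carrier S" unfolding S_one by (rule const_ps_closed) simp
    show "\<And>x y z. x \<in> carrier S \<Longrightarrow> y \<in> carrier S \<Longrightarrow> z \<in> carrier S \<Longrightarrow>
      x \<otimes>\<^bsub>S\<^esub> y \<otimes>\<^bsub>S\<^esub> z = x \<otimes>\<^bsub>S\<^esub> (y \<otimes>\<^bsub>S\<^esub> z)"
      unfolding S_mult by (rule ps_mult_assoc)
    show "\<And>x. x \<in> carrier S \<Longrightarrow> \<one>\<^bsub>S\<^esub> \<otimes>\<^bsub>S\<^esub> x = x"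
      unfolding S_mult S_one by (simp add: ps_mult_const_left)
    show "\<And>x. x \<in> carrier S \<Longrightarrow> x \<otimes>\<^bsub>S\<^esub> \<one>\<^bsub>S\<^esub> = x"
      unfolding S_mult S_one by (rule ps_mult_one_right)
  qed
  show "\<And>x y z. x \<in> carrier S \<Longrightarrow> y \<in> carrier S \<Longrightarrow> z \<in> carrier S \<Longrightarrow>
      (x \<oplus>\<^bsub>S\<^esub> y) \<otimes>\<^bsub>S\<^esub> z = x \<otimes>\<^bsub>S\<^esub> z \<oplus>\<^bsub>S\<^esub> y \<otimes>\<^bsub>S\<^esub> z"
    unfolding S_mult S_add by (rule ps_mult_add_left)
  show "\<And>x y z. x \<in> carrier S \<Longrightarrow> y \<in> carrier S \<Longrightarrow> z \<in> carrier S \<Longrightarrow>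
      z \<otimes>\<^bsub>S\<^esub> (x \<oplus>\<^bsub>S\<^esub> y) = z \<otimes>\<^bsub>S\<^esub> x \<oplus>\<^bsub>S\<^esub> z \<otimes>\<^bsub>S\<^esub> y"
    unfolding S_mult S_add by (rule ps_mult_add_right)
qed

end

section \<open>The quotient by a closed stable ideal\<close>

locale skew_stable_ideal = skew_filtered_ring +
  fixes I :: "'a set"
  assumes ideal: "ideal I R" and closed: "fclosed R w I"
    and sigma_stable: "\<sigma> ` I \<subseteq> I" and delta_stable: "\<delta> ` I \<subseteq> I"
begin

abbreviation Q where "Q \<equiv> R Quot I"
abbreviation cls where "cls x \<equiv> I +> x"
abbreviation wbar where "wbar x \<equiv> quot_filt w (cls x)"

lemma I_subgroup: "additive_subgroup I R"
  by (rule ideal.axioms(1)[OF ideal])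

lemma I_abelian_subgroup: "abelian_subgroup I R"
  using abelian_subgroupI3[OF I_subgroup is_abelian_group] .

lemma I_carrier: "x \<in> I \<Longrightarrow> x \<in> carrier R"
  using additive_subgroup.a_subset[OF I_subgroup] by blast

lemma I_add: "x \<in> I \<Longrightarrow> y \<in> I \<Longrightarrow> x \<oplus> y \<in> I"
  by (rule additive_subgroup.a_closed[OF I_subgroup])

lemma I_neg: "x \<in> I \<Longrightarrow> \<ominus> x \<in> I"
  by (rule additive_subgroup.a_inv_closed[OF I_subgroup])

lemma I_zero: "\<zero> \<in> I"
  by (rule additive_subgroup.zero_closed[OF I_subgroup])

lemma I_lmult: "x \<in> carrier R \<Longrightarrow> y \<in> I \<Longrightarrow> x \<otimes> y \<in> I"
  by (rule ideal.I_l_closed[OF ideal])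

lemma I_rmult: "x \<in> carrier R \<Longrightarrow> y \<in> I \<Longrightarrow> y \<otimes> x \<in> I"
  by (rule ideal.I_r_closed[OF ideal])

lemma finsum_in_I: "finite A \<Longrightarrow> (\<And>k. k \<in> A \<Longrightarrow> f k \<in> I) \<Longrightarrow> finsum R f A \<in> I"
proof (induction A rule: finite_induct)
  case (insert x F)
  have "f \<in> F \<rightarrow> carrier R" "f x \<in> carrier R" using insert I_carrier by auto
  then show ?case using insert by (simp add: finsum_insert I_add)
qed (simp add: I_zero)

lemma Q_ring: "ring Q"
  by (rule ideal.quotient_is_ring[OF ideal])

lemma cls_hom: "cls \<in> ring_hom R Q"
  by (rule ideal.rcos_ring_hom[OF ideal])

lemma cls_add: "x \<in> carrier R \<Longrightarrow> y \<in> carrier R \<Longrightarrow> cls (x \<oplus> y) = cls x \<oplus>\<^bsub>Q\<^esub> cls y"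
  by (rule ring_hom_add[OF cls_hom])

lemma cls_mult: "x \<in> carrier R \<Longrightarrow> y \<in> carrier R \<Longrightarrow> cls (x \<otimes> y) = cls x \<otimes>\<^bsub>Q\<^esub> cls y"
  by (rule ring_hom_mult[OF cls_hom])

lemma cls_one: "cls \<one> = \<one>\<^bsub>Q\<^esub>"
  by (rule ring_hom_one[OF cls_hom])

lemma cls_closed: "x \<in> carrier R \<Longrightarrow> cls x \<in> carrier Q"
  by (rule ring_hom_closed[OF cls_hom])

lemma Q_zero: "\<zero>\<^bsub>Q\<^esub> = I"
  unfolding FactRing_def by simp

lemma cls_zero: "cls \<zero> = I"
  by (rule a_rcos_zero[OF ideal I_zero])

lemma Q_carrier: "C \<in> carrier Q \<longleftrightarrow> (\<exists>x\<in>carrier R. C = cls x)"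
  unfolding FactRing_def A_RCOSETS_def' by auto

lemma cls_mem_iff: "x \<in> carrier R \<Longrightarrow> z \<in> cls x \<longleftrightarrow> (\<exists>i\<in>I. z = i \<oplus> x)"
  unfolding a_r_coset_def' by auto

lemma cls_self: "x \<in> carrier R \<Longrightarrow> x \<in> cls x"
  by (rule abelian_subgroup.a_rcos_self[OF I_abelian_subgroup])

lemma cls_neg: "x \<in> carrier R \<Longrightarrow> cls (\<ominus> x) = \<ominus>\<^bsub>Q\<^esub> cls x"
proof -
  assume x: "x \<in> carrier R"
  interpret Q: ring Q by (rule Q_ring)
  have "cls (\<ominus> x) \<oplus>\<^bsub>Q\<^esub> cls x = \<zero>\<^bsub>Q\<^esub>"
    using x by (simp add: cls_add[symmetric] l_neg cls_zero Q_zero)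
  from Q.minus_equality[OF this cls_closed[OF x] cls_closed[OF add.inv_closed[OF x]]] show ?thesis ..
qed

lemma cls_minus: "x \<in> carrier R \<Longrightarrow> y \<in> carrier R \<Longrightarrow> cls (x \<ominus> y) = cls x \<ominus>\<^bsub>Q\<^esub> cls y"
  unfolding a_minus_def by (simp add: cls_add cls_neg)

lemma cls_eq_iff: "x \<in> carrier R \<Longrightarrow> y \<in> carrier R \<Longrightarrow> cls x = cls y \<longleftrightarrow> x \<ominus> y \<in> I"
proof
  assume xy: "x \<in> carrier R" "y \<in> carrier R" and e: "cls x = cls y"
  have "x \<in> cls y" using e cls_self[OF xy(1)] by simp
  then show "x \<ominus> y \<in> I"
    using abelian_subgroup.a_rcos_module_minus[OF I_abelian_subgroup ring_axioms xy(2,1)] by simp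
next
  assume xy: "x \<in> carrier R" "y \<in> carrier R" and m: "x \<ominus> y \<in> I"
  have "x \<in> cls y"
    using abelian_subgroup.a_rcos_module_minus[OF I_abelian_subgroup ring_axioms xy(2,1)] m by simp
  then show "cls x = cls y"
    using abelian_subgroup.a_repr_independence'[OF I_abelian_subgroup _ xy(2)] by simp
qed

lemma cls_eq_I_iff: "x \<in> carrier R \<Longrightarrow> cls x = I \<longleftrightarrow> x \<in> I"
  using cls_eq_iff[of x \<zero>] cls_zero by (simp add: a_minus_def)

lemma cls_eq_if_mem: "x \<in> carrier R \<Longrightarrow> z \<in> cls x \<Longrightarrow> cls z = cls x"
  using abelian_subgroup.a_repr_independence'[OF I_abelian_subgroup] by blast

lemma quot_map_cls:
  assumes f: "additive f" "f ` I \<subseteq> I" and x: "x \<in> carrier R"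
  shows "quot_map R I f (cls x) = cls (f x)"
proof -
  define s where "s = (SOME r. r \<in> cls x)"
  have "s \<in> cls x" unfolding s_def using cls_self[OF x] by (rule someI)
  then obtain i where i: "i \<in> I" "s = i \<oplus> x" using cls_mem_iff[OF x] by blast
  then have "f s = f i \<oplus> f x" "f i \<in> I" using f i I_carrier x unfolding additive_def by auto
  moreover have "f x \<in> carrier R" using f(1) x unfolding additive_def by blast
  ultimately have "cls (f s) = cls (f x)"
    using I_carrier by (subst cls_eq_iff) (auto simp: a_minus_def a_assoc r_neg)
  then show ?thesis unfolding quot_map_def s_def by simp
qed

lemma quot_map_sigma: "x \<in> carrier R \<Longrightarrow> quot_map R I \<sigma> (cls x) = cls (\<sigma> x)"
  using quot_map_cls[OF sigma_additive sigma_stable] .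

lemma quot_map_delta: "x \<in> carrier R \<Longrightarrow> quot_map R I \<delta> (cls x) = cls (\<delta> x)"
  using quot_map_cls[OF delta_additive delta_stable] .

lemma w_le_quot_filt: "z \<in> C \<Longrightarrow> w z \<le> quot_filt w C"
  unfolding quot_filt_def by (rule Sup_upper) simp

lemma w_le_wbar: "x \<in> carrier R \<Longrightarrow> w x \<le> wbar x"
  using w_le_quot_filt cls_self by blast

lemma quot_filt_gtD: "ereal B < quot_filt w C \<Longrightarrow> \<exists>z\<in>C. ereal B < w z"
  unfolding quot_filt_def by (simp add: less_Sup_iff)

lemma wbar_not_MInf: "x \<in> carrier R \<Longrightarrow> wbar x \<noteq> -\<infinity>"
  using w_le_wbar[of x] w_not_MInf[of x] by (metis ereal_infty_less_eq2(2))

text \<open>Here the closedness of I is used: representatives of arbitrarily large filtration give a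
  sequence in I converging to -x.\<close>

lemma wbar_eq_PInf_imp_mem_I: assumes x: "x \<in> carrier R" and inf: "wbar x = \<infinity>" shows "x \<in> I"
proof -
  have "\<forall>n::nat. \<exists>z\<in>cls x. ereal (real n) < w z" using inf quot_filt_gtD by simp
  then obtain z where z: "\<And>n. z n \<in> cls x" "\<And>n. ereal (real n) < w (z n)" by metis
  have "\<forall>n. \<exists>i\<in>I. z n = i \<oplus> x" using z(1) cls_mem_iff[OF x] by blast
  then obtain a where a: "\<And>n. a n \<in> I" "\<And>n. z n = a n \<oplus> x" by metis
  have conv: "fconv R w (\<lambda>n. \<ominus> a n) x" unfolding fconv_def
  proof (intro conjI allI)
    show "x \<in> carrier R" by fact
    fix N :: real
    obtain M :: nat where M: "N \<le> real M" using real_arch_simple by blast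
    have "ereal N \<le> w (\<ominus> a n \<ominus> x)" if "n \<ge> M" for n
    proof -
      have "\<ominus> a n \<ominus> x = \<ominus> (z n)" using a x I_carrier[OF a(1)] by (simp add: a_minus_def minus_add)
      then have "w (\<ominus> a n \<ominus> x) = w (z n)" using a x I_carrier[OF a(1)] by simp
      moreover have "ereal N \<le> ereal (real n)" using M that by simp
      moreover have "ereal (real n) \<le> w (z n)" using z(2)[of n] by (rule less_imp_le)
      ultimately show ?thesis by (metis order.trans)
    qed
    then show "\<exists>M. \<forall>n\<ge>M. ereal N \<le> w (\<ominus> a n \<ominus> x)" by blast
  qed
  have mem: "\<And>n. \<ominus> a n \<in> I" using a(1) I_neg by blast
  have "\<forall>a L. (\<forall>n. a n \<in> I) \<longrightarrow> fconv R w a L \<longrightarrow> L \<in> I" using closed unfolding fclosed_def .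
  from this[rule_format, OF mem conv] show ?thesis .
qed

lemma wbar_neg_le: "x \<in> carrier R \<Longrightarrow> wbar x \<le> wbar (\<ominus> x)"
  unfolding quot_filt_def
proof (rule Sup_least)
  fix b assume x: "x \<in> carrier R" and "b \<in> w ` cls x"
  then obtain z where z: "z \<in> cls x" "b = w z" by blast
  obtain i where i: "i \<in> I" "z = i \<oplus> x" using z cls_mem_iff x by blast
  have "\<ominus> z = (\<ominus> i) \<oplus> (\<ominus> x)" using i x I_carrier by (simp add: minus_add)
  then have "\<ominus> z \<in> cls (\<ominus> x)" using cls_mem_iff[of "\<ominus> x"] x i I_neg by auto
  then have "w (\<ominus> z) \<le> Sup (w ` cls (\<ominus> x))" by (intro Sup_upper imageI)
  moreover have "w (\<ominus> z) = b" using z i x I_carrier by simp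
  ultimately show "b \<le> Sup (w ` cls (\<ominus> x))" by simp
qed

lemma wbar_neg: "x \<in> carrier R \<Longrightarrow> wbar (\<ominus> x) = wbar x"
  using wbar_neg_le[of x] wbar_neg_le[of "\<ominus> x"] by simp

lemma wbar_add: "x \<in> carrier R \<Longrightarrow> y \<in> carrier R \<Longrightarrow> min (wbar x) (wbar y) \<le> wbar (x \<oplus> y)"
proof (rule ereal_le_if_reals_below)
  fix B assume xy: "x \<in> carrier R" "y \<in> carrier R" and B: "ereal B < min (wbar x) (wbar y)"
  obtain z1 where z1: "z1 \<in> cls x" "ereal B < w z1" using B quot_filt_gtD by auto
  obtain z2 where z2: "z2 \<in> cls y" "ereal B < w z2" using B quot_filt_gtD by auto
  obtain i1 where i1: "i1 \<in> I" "z1 = i1 \<oplus> x" using z1 cls_mem_iff xy by blast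
  obtain i2 where i2: "i2 \<in> I" "z2 = i2 \<oplus> y" using z2 cls_mem_iff xy by blast
  note z = z1 z2 and i = i1 i2
  have c: "i1 \<in> carrier R" "i2 \<in> carrier R" using i I_carrier by auto
  have "z1 \<oplus> z2 = (i1 \<oplus> i2) \<oplus> (x \<oplus> y)" using i c xy by algebra
  then have "z1 \<oplus> z2 \<in> cls (x \<oplus> y)" using cls_mem_iff[of "x \<oplus> y"] xy i I_add by auto
  then have "w (z1 \<oplus> z2) \<le> wbar (x \<oplus> y)" by (rule w_le_quot_filt)
  moreover have "ereal B \<le> w (z1 \<oplus> z2)" using z c xy i by (intro w_add_ge) auto
  ultimately show "ereal B \<le> wbar (x \<oplus> y)" by simp
qed

lemma wbar_minus: "x \<in> carrier R \<Longrightarrow> y \<in> carrier R \<Longrightarrow> min (wbar x) (wbar y) \<le> wbar (x \<ominus> y)"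
  unfolding a_minus_def using wbar_add[of x "\<ominus> y"] wbar_neg[of y] by simp

text \<open>Because d maps the coset of x into the coset of d x.\<close>

lemma wbar_step:
  assumes d: "additive d" "d ` I \<subseteq> I"
    "\<And>z B. z \<in> carrier R \<Longrightarrow> ereal B \<le> w z \<Longrightarrow> ereal (B + 1) \<le> w (d z)"
    and x: "x \<in> carrier R"
  shows "wbar x + 1 \<le> wbar (d x)"
proof (rule ereal_add_one_le[OF wbar_not_MInf[OF x]])
  fix B assume "ereal B < wbar x"
  then obtain z where z: "z \<in> cls x" "ereal B < w z" using quot_filt_gtD by blast
  then obtain i where i: "i \<in> I" "z = i \<oplus> x" using cls_mem_iff[OF x] by blast
  have zc: "z \<in> carrier R" using i x I_carrier by simp
  have "d z = d i \<oplus> d x" "d i \<in> I" "d x \<in> carrier R"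
    using d(1,2) i x I_carrier unfolding additive_def by auto
  then have "d z \<in> cls (d x)" using cls_mem_iff by blast
  then have "w (d z) \<le> wbar (d x)" by (rule w_le_quot_filt)
  moreover have "ereal (B + 1) \<le> w (d z)" using d(3)[OF zc] z(2) by simp
  ultimately show "ereal (B + 1) \<le> wbar (d x)" by simp
qed

lemma sigma_minus_id_additive: "additive (\<lambda>x. \<sigma> x \<ominus> x)"
  unfolding additive_def using sigma_add by (auto simp: a_minus_def minus_add a_ac)

lemma sigma_minus_id_stable: "(\<lambda>x. \<sigma> x \<ominus> x) ` I \<subseteq> I"
  using sigma_stable I_carrier I_add I_neg by (auto simp: a_minus_def)

lemma wbar_sigma_minus_id: "x \<in> carrier R \<Longrightarrow> wbar x + 1 \<le> wbar (\<sigma> x \<ominus> x)"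
  by (rule wbar_step[OF sigma_minus_id_additive sigma_minus_id_stable w_sigma_minus_id_ge])

text \<open>If \<sigma>(x) \<in> I then \<sigma>(x) - x and -x have the same class, so wbar_sigma_minus_id gives
  wbar x + 1 \<le> wbar x.\<close>

lemma mem_I_if_sigma_mem_I:
  assumes x: "x \<in> carrier R" and sx: "\<sigma> x \<in> I"
  shows "x \<in> I"
proof -
  have "(\<sigma> x \<ominus> x) \<ominus> (\<ominus> x) = \<sigma> x" using x sigma_closed[OF x] by algebra
  then have "cls (\<sigma> x \<ominus> x) = cls (\<ominus> x)" using x sx by (subst cls_eq_iff) auto
  then have "wbar x + 1 \<le> wbar x" using wbar_sigma_minus_id[OF x] wbar_neg[OF x] by simp
  then have "wbar x = \<infinity>" using wbar_not_MInf[OF x] by (cases "wbar x") auto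
  then show ?thesis using wbar_eq_PInf_imp_mem_I x by blast
qed

abbreviation sigma_bar where "sigma_bar \<equiv> quot_map R I \<sigma>"
abbreviation delta_bar where "delta_bar \<equiv> quot_map R I \<delta>"

lemma sigma_bar_hom: "sigma_bar \<in> ring_hom Q Q"
proof (rule ring_hom_memI)
  fix C D assume "C \<in> carrier Q" "D \<in> carrier Q"
  then obtain x y where xy: "x \<in> carrier R" "C = cls x" "y \<in> carrier R" "D = cls y"
    using Q_carrier by metis
  show "sigma_bar C \<in> carrier Q" using xy by (simp add: quot_map_sigma cls_closed)
  show "sigma_bar (C \<otimes>\<^bsub>Q\<^esub> D) = sigma_bar C \<otimes>\<^bsub>Q\<^esub> sigma_bar D"
    using xy by (simp add: cls_mult[symmetric] quot_map_sigma sigma_mult)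
  show "sigma_bar (C \<oplus>\<^bsub>Q\<^esub> D) = sigma_bar C \<oplus>\<^bsub>Q\<^esub> sigma_bar D"
    using xy by (simp add: cls_add[symmetric] quot_map_sigma sigma_add)
next
  show "sigma_bar \<one>\<^bsub>Q\<^esub> = \<one>\<^bsub>Q\<^esub>" using quot_map_sigma[of \<one>] by (simp add: cls_one[symmetric])
qed

lemma sigma_bar_bij: "bij_betw sigma_bar (carrier Q) (carrier Q)"
  unfolding bij_betw_def
proof
  show "inj_on sigma_bar (carrier Q)"
  proof (rule inj_onI)
    fix C D assume "C \<in> carrier Q" "D \<in> carrier Q" and e: "sigma_bar C = sigma_bar D"
    then obtain x y where xy: "x \<in> carrier R" "C = cls x" "y \<in> carrier R" "D = cls y"
      using Q_carrier by metis
    have "\<sigma> (x \<ominus> y) \<in> I"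
      using e xy additive_minus[OF sigma_additive, of x y] by (simp add: quot_map_sigma cls_eq_iff)
    then show "C = D" using xy mem_I_if_sigma_mem_I[of "x \<ominus> y"] by (simp add: cls_eq_iff)
  qed
  have "carrier Q \<subseteq> sigma_bar ` carrier Q"
  proof
    fix C assume "C \<in> carrier Q"
    then obtain y where y: "y \<in> carrier R" "C = cls y" using Q_carrier by blast
    then have "y \<in> \<sigma> ` carrier R" using sigma_bij unfolding bij_betw_def by simp
    then obtain x where x: "x \<in> carrier R" "\<sigma> x = y" by blast
    then show "C \<in> sigma_bar ` carrier Q"
      using y by (intro image_eqI[of _ _ "cls x"]) (simp_all add: quot_map_sigma cls_closed)
  qed
  then show "sigma_bar ` carrier Q = carrier Q" using ring_hom_closed[OF sigma_bar_hom] by blast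
qed

lemma quotient_skew_derivation: "skew_derivation Q sigma_bar delta_bar"
  unfolding skew_derivation_def
proof (intro conjI ballI)
  show "sigma_bar \<in> ring_iso Q Q" unfolding ring_iso_def using sigma_bar_hom sigma_bar_bij by blast
  show "delta_bar \<in> carrier Q \<rightarrow> carrier Q"
  proof
    fix C assume "C \<in> carrier Q"
    then obtain x where "x \<in> carrier R" "C = cls x" using Q_carrier by blast
    then show "delta_bar C \<in> carrier Q" by (simp add: quot_map_delta cls_closed)
  qed
  fix C D assume "C \<in> carrier Q" "D \<in> carrier Q"
  then obtain x y where xy: "x \<in> carrier R" "C = cls x" "y \<in> carrier R" "D = cls y"
    using Q_carrier by metis
  show "delta_bar (C \<oplus>\<^bsub>Q\<^esub> D) = delta_bar C \<oplus>\<^bsub>Q\<^esub> delta_bar D"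
    using xy by (simp add: cls_add[symmetric] quot_map_delta delta_add)
  show "delta_bar (C \<otimes>\<^bsub>Q\<^esub> D) = delta_bar C \<otimes>\<^bsub>Q\<^esub> D \<oplus>\<^bsub>Q\<^esub> sigma_bar C \<otimes>\<^bsub>Q\<^esub> delta_bar D"
    using xy by (simp add: cls_add[symmetric] cls_mult[symmetric] quot_map_delta quot_map_sigma delta_mult)
qed

lemma fdeg_quot_pos:
  assumes d: "additive d" "d ` I \<subseteq> I"
    "\<And>z B. z \<in> carrier R \<Longrightarrow> ereal B \<le> w z \<Longrightarrow> ereal (B + 1) \<le> w (d z)"
    and dq: "\<And>x. x \<in> carrier R \<Longrightarrow> D (cls x) = cls (d x)"
  shows "fdeg Q (quot_filt w) D > 0"
proof -
  have "1 \<le> quot_filt w (D C) - quot_filt w C" if C: "C \<in> carrier Q - {\<zero>\<^bsub>Q\<^esub>}" for C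
  proof -
    obtain x where x: "x \<in> carrier R" "C = cls x" using C Q_carrier by blast
    then have "x \<notin> I" using C cls_eq_I_iff Q_zero by auto
    then obtain c where c: "wbar x = ereal c"
      using wbar_eq_PInf_imp_mem_I wbar_not_MInf x by (cases "wbar x") auto
    show ?thesis using wbar_step[OF d x(1)] c x dq[OF x(1)]
      by (cases "wbar (d x)") (auto simp: ereal_le_minus_iff)
  qed
  then have "1 \<le> fdeg Q (quot_filt w) D" unfolding fdeg_def by (rule INF_greatest)
  then show ?thesis by (rule less_le_trans[rotated]) simp
qed

lemma quotient_compatible: "compatible Q (quot_filt w) sigma_bar delta_bar"
  unfolding compatible_def
proof
  show "fdeg Q (quot_filt w) (\<lambda>C. sigma_bar C \<ominus>\<^bsub>Q\<^esub> C) > 0"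
  proof (rule fdeg_quot_pos[OF sigma_minus_id_additive sigma_minus_id_stable])
    show "\<And>z B. z \<in> carrier R \<Longrightarrow> ereal B \<le> w z \<Longrightarrow> ereal (B + 1) \<le> w (\<sigma> z \<ominus> z)"
      by (rule w_sigma_minus_id_ge)
    show "\<And>x. x \<in> carrier R \<Longrightarrow> sigma_bar (cls x) \<ominus>\<^bsub>Q\<^esub> cls x = cls (\<sigma> x \<ominus> x)"
      by (simp add: quot_map_sigma cls_minus)
  qed
  show "fdeg Q (quot_filt w) delta_bar > 0"
    by (rule fdeg_quot_pos[OF delta_additive delta_stable w_delta_ge quot_map_delta])
qed

end

section \<open>Reduction of coefficients modulo I\<close>

context skew_stable_ideal
begin

abbreviation IS where "IS \<equiv> ideal_times_S R w \<sigma> \<delta> I"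

lemma S_finsum_coeff:
  assumes "finite A" "f \<in> A \<rightarrow> carrier S"
  shows "finsum S f A n = finsum R (\<lambda>k. f k n) A"
  using assms
proof (induction A rule: finite_induct)
  case empty
  interpret S: ring S by (rule S_ring)
  show ?case by (simp add: S_zero)
next
  case (insert x F)
  interpret S: ring S by (rule S_ring)
  have "f k \<in> carrier S" if "k \<in> insert x F" for k using insert.prems that by blast
  then have "(\<lambda>k. f k n) \<in> F \<rightarrow> carrier R" "f x n \<in> carrier R" by auto
  then show ?case using insert by (simp add: S.finsum_insert S_add finsum_insert)
qed

lemma S_neg: "u \<in> carrier S \<Longrightarrow> \<ominus>\<^bsub>S\<^esub> u = (\<lambda>n. \<ominus> u n)"
  using abelian_group.minus_equality[OF S_abelian_group, of "\<lambda>n. \<ominus> u n" u] S_neg_closed[of u]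
  by (auto simp: S_add S_zero l_neg)

lemma IS_coeff_in_I: "t \<in> IS \<Longrightarrow> t n \<in> I"
proof -
  assume "t \<in> IS"
  then obtain m :: nat and a s where t: "t = finsum S (\<lambda>k. const_ps R (a k) \<otimes>\<^bsub>S\<^esub> s k) {..<m}"
    and as: "\<forall>k<m. a k \<in> I \<and> s k \<in> bseries R w"
    unfolding ideal_times_S_def by blast
  have sS: "k < m \<Longrightarrow> s k \<in> carrier S" for k using as S_carrier by auto
  have e: "k < m \<Longrightarrow> const_ps R (a k) \<otimes>\<^bsub>S\<^esub> s k = (\<lambda>n. a k \<otimes> s k n)" for k
    unfolding S_mult using as sS I_carrier by (intro ps_mult_const_left) auto
  then have "(\<lambda>k. const_ps R (a k) \<otimes>\<^bsub>S\<^esub> s k) \<in> {..<m} \<rightarrow> carrier S"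
    using sS as I_carrier by (auto intro!: scale_closed)
  then have "t n = finsum R (\<lambda>k. (const_ps R (a k) \<otimes>\<^bsub>S\<^esub> s k) n) {..<m}"
    unfolding t by (simp add: S_finsum_coeff)
  also have "\<dots> = finsum R (\<lambda>k. a k \<otimes> s k n) {..<m}"
    using e as sS I_carrier by (intro finsum_cong) auto
  also have "\<dots> \<in> I" using as sS by (intro finsum_in_I) (auto intro!: I_rmult)
  finally show ?thesis .
qed

lemma ps_closure_IS_coeff_in_I:
  assumes s: "s \<in> ps_closure R w IS"
  shows "s n \<in> I"
proof -
  have sS: "s \<in> carrier S" using s unfolding ps_closure_def S_carrier by blast
  have "\<forall>k::nat. \<exists>t \<in> IS. ereal (real k) \<le> ps_filt w (\<lambda>n. s n \<ominus> t n)"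
    using s unfolding ps_closure_def by blast
  then obtain t where t: "\<And>k. t k \<in> IS" "\<And>k. ereal (real k) \<le> ps_filt w (\<lambda>n. s n \<ominus> t k n)"
    by metis
  have ti: "\<And>k. t k n \<in> I" using t(1) IS_coeff_in_I by blast
  have conv: "fconv R w (\<lambda>k. t k n) (s n)" unfolding fconv_def
  proof (intro conjI allI)
    show "s n \<in> carrier R" using sS by simp
    fix N :: real
    obtain M :: nat where M: "N + real n / 2 \<le> real M" using real_arch_simple by blast
    have "ereal N \<le> w (t k n \<ominus> s n)" if "k \<ge> M" for k
    proof -
      have "ereal (real k - real n / 2) \<le> w (s n \<ominus> t k n)" using t(2)[of k] unfolding ps_filt_ge_iff by blast
      moreover have "w (s n \<ominus> t k n) = w (t k n \<ominus> s n)" using sS ti[of k] I_carrier by (simp add: w_minus_commute)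
      moreover have "ereal N \<le> ereal (real k - real n / 2)" using M that by simp
      ultimately show ?thesis by (metis order.trans)
    qed
    then show "\<exists>M. \<forall>k\<ge>M. ereal N \<le> w (t k n \<ominus> s n)" by blast
  qed
  have "\<forall>a L. (\<forall>n. a n \<in> I) \<longrightarrow> fconv R w a L \<longrightarrow> L \<in> I" using closed unfolding fclosed_def .
  from this[rule_format, OF ti conv] show ?thesis .
qed

lemma ps_truncate_mem_IS:
  assumes sS: "s \<in> carrier S" and sI: "\<And>n. s n \<in> I"
  shows "ps_truncate M s \<in> IS"
proof -
  have e: "(const_ps R (s k) \<otimes>\<^bsub>S\<^esub> xpow k) n = (if k = n then s n else \<zero>)" for k n
    using sS unfolding S_mult ps_mult_const_left[OF S_coeff_closed[OF sS] xpow_closed]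
    by (simp add: xpow_def)
  have "(\<lambda>k. const_ps R (s k) \<otimes>\<^bsub>S\<^esub> xpow k) \<in> {..<M} \<rightarrow> carrier S"
    unfolding S_mult using sS by (auto intro!: ps_mult_closed const_ps_closed xpow_closed)
  then have "finsum S (\<lambda>k. const_ps R (s k) \<otimes>\<^bsub>S\<^esub> xpow k) {..<M} n
      = finsum R (\<lambda>k. if k = n then s n else \<zero>) {..<M}" for n
    by (simp add: S_finsum_coeff e)
  also have "\<dots> n = ps_truncate M s n" for n
    using sS finsum_indicator[of n "{..<M}" "s n"] unfolding ps_truncate_def
    by (auto intro: add.finprod_one_eqI)
  finally have "ps_truncate M s = finsum S (\<lambda>k. const_ps R (s k) \<otimes>\<^bsub>S\<^esub> xpow k) {..<M}" by auto
  then show ?thesis unfolding ideal_times_S_def using sI xpow_closed S_carrier by blast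
qed

text \<open>Closedness of I gives one inclusion; truncations approximate the series for the other.\<close>

lemma ps_closure_IS_eq: "ps_closure R w IS = {s \<in> carrier S. \<forall>n. s n \<in> I}"
proof
  show "ps_closure R w IS \<subseteq> {s \<in> carrier S. \<forall>n. s n \<in> I}"
    using ps_closure_IS_coeff_in_I unfolding ps_closure_def S_carrier by blast
  show "{s \<in> carrier S. \<forall>n. s n \<in> I} \<subseteq> ps_closure R w IS"
  proof
    fix s assume "s \<in> {s \<in> carrier S. \<forall>n. s n \<in> I}"
    then have sS: "s \<in> carrier S" and sI: "\<And>n. s n \<in> I" by auto
    have "\<exists>t\<in>IS. ereal N \<le> ps_filt w (\<lambda>n. s n \<ominus> t n)" for N
    proof -
      obtain M where M: "\<forall>n\<ge>M. ereal (N - real n / 2) \<le> w (s n)"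
        using sS unfolding S_carrier_iff coeff_growth_def by blast
      have "ereal N \<le> ps_filt w (\<lambda>n. s n \<ominus> ps_truncate M s n)"
        unfolding ps_filt_ge_iff ps_truncate_def using sS M by (auto simp: r_neg a_minus_def)
      then show ?thesis using ps_truncate_mem_IS[OF sS sI] by blast
    qed
    then show "s \<in> ps_closure R w IS" unfolding ps_closure_def using sS S_carrier by blast
  qed
qed

lemma coef_in_I: "y \<in> I \<Longrightarrow> coef i k y \<in> I"
  using sigma_stable delta_stable by (induction i arbitrary: k) (auto intro!: I_add I_zero)

lemma ps_closure_IS_ideal: "ideal (ps_closure R w IS) S"
proof -
  interpret S: ring S by (rule S_ring)
  show ?thesis
  proof (rule idealI[OF S_ring])
    show "subgroup (ps_closure R w IS) (add_monoid S)"
      unfolding ps_closure_IS_eq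
      by (rule S.add.subgroupI) (auto simp: S_neg S_add S_zero S_neg_closed S_add_closed
          I_neg I_add I_zero const_ps_closed[of \<zero>, unfolded const_ps_def, simplified])
  next
    fix a x assume "a \<in> ps_closure R w IS" and x: "x \<in> carrier S"
    then have aS: "a \<in> carrier S" and aI: "\<And>n. a n \<in> I" unfolding ps_closure_IS_eq by auto
    have "(x \<otimes>\<^bsub>S\<^esub> a) n \<in> I" for n
      unfolding S_mult ps_mult_def using x aS aI coef_in_I
      by (auto intro!: finsum_in_I fsum_in_closed_subgroup[OF I_subgroup closed]
          tends_to_zero_mult_term I_lmult simp: mult_term_def)
    moreover have "(a \<otimes>\<^bsub>S\<^esub> x) n \<in> I" for n
      unfolding S_mult ps_mult_def using x aS aI
      by (auto intro!: finsum_in_I fsum_in_closed_subgroup[OF I_subgroup closed]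
          tends_to_zero_mult_term I_rmult simp: mult_term_def)
    ultimately show "x \<otimes>\<^bsub>S\<^esub> a \<in> ps_closure R w IS" "a \<otimes>\<^bsub>S\<^esub> x \<in> ps_closure R w IS"
      unfolding ps_closure_IS_eq using x aS by auto
  qed
qed

end

context skew_stable_ideal
begin

abbreviation T where "T \<equiv> skew_ps Q (quot_filt w) sigma_bar delta_bar"

lemma T_carrier_iff: "U \<in> carrier T \<longleftrightarrow> (\<forall>n. U n \<in> carrier Q) \<and>
    (\<forall>N::real. \<exists>M. \<forall>n\<ge>M. ereal (N - real n / 2) \<le> quot_filt w (U n))"
  unfolding skew_ps_def bseries_def using tendsto_PInf_iff_eventually_ge[of "quot_filt w" U] by simp

lemma quot_fconv_unique:
  assumes "fconv Q (quot_filt w) s L1" "fconv Q (quot_filt w) s L2" "\<And>n. s n \<in> carrier Q"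
  shows "L1 = L2"
proof -
  have "L1 \<in> carrier Q" "L2 \<in> carrier Q" using assms(1,2) unfolding fconv_def by simp_all
  then obtain l1 l2 where l: "l1 \<in> carrier R" "L1 = cls l1" "l2 \<in> carrier R" "L2 = cls l2"
    unfolding Q_carrier by blast
  have "ereal N \<le> wbar (l1 \<ominus> l2)" for N
  proof -
    obtain M1 where M1: "\<forall>n\<ge>M1. ereal N \<le> quot_filt w (s n \<ominus>\<^bsub>Q\<^esub> L1)"
      using assms(1) unfolding fconv_def by blast
    obtain M2 where M2: "\<forall>n\<ge>M2. ereal N \<le> quot_filt w (s n \<ominus>\<^bsub>Q\<^esub> L2)"
      using assms(2) unfolding fconv_def by blast
    obtain x where x: "x \<in> carrier R" "s (max M1 M2) = cls x"
      using assms(3)[of "max M1 M2"] unfolding Q_carrier by blast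
    have "ereal N \<le> quot_filt w (s (max M1 M2) \<ominus>\<^bsub>Q\<^esub> L1)"
      "ereal N \<le> quot_filt w (s (max M1 M2) \<ominus>\<^bsub>Q\<^esub> L2)"
      using M1 M2 by auto
    then have "ereal N \<le> wbar (x \<ominus> l2)" "ereal N \<le> wbar (x \<ominus> l1)"
      unfolding x(2) l(2) l(4) using x l by (simp_all add: cls_minus)
    then have "ereal N \<le> min (wbar (x \<ominus> l2)) (wbar (x \<ominus> l1))" by simp
    also have "\<dots> \<le> wbar ((x \<ominus> l2) \<ominus> (x \<ominus> l1))" using x l by (intro wbar_minus) auto
    also have "(x \<ominus> l2) \<ominus> (x \<ominus> l1) = l1 \<ominus> l2" using x l by algebra
    finally show ?thesis .
  qed
  then have "wbar (l1 \<ominus> l2) = \<infinity>" by (rule ereal_top)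
  then have "l1 \<ominus> l2 \<in> I" using wbar_eq_PInf_imp_mem_I l by blast
  then show ?thesis using l cls_eq_iff by simp
qed

lemma cls_finsum: "finite A \<Longrightarrow> f \<in> A \<rightarrow> carrier R \<Longrightarrow> cls (finsum R f A) = finsum Q (\<lambda>i. cls (f i)) A"
proof (induction A rule: finite_induct)
  case empty
  interpret Q: ring Q by (rule Q_ring)
  show ?case using cls_zero Q_zero by simp
next
  case (insert x F)
  interpret Q: ring Q by (rule Q_ring)
  have "(\<lambda>i. cls (f i)) \<in> F \<rightarrow> carrier Q" "cls (f x) \<in> carrier Q"
    using insert.prems by (auto intro!: cls_closed)
  then show ?case using insert by (simp add: finsum_insert Q.finsum_insert cls_add finsum_closed)
qed

lemma cls_fsum:
  assumes "\<And>i. b i \<in> carrier R" "tends_to_zero b"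
  shows "fsum Q (quot_filt w) (\<lambda>i. cls (b i)) = cls (fsum R w b)"
proof -
  interpret Q: ring Q by (rule Q_ring)
  have c: "fconv R w (partial_sum b) (fsum R w b)" "fsum R w b \<in> carrier R"
    using fconv_fsum fsum_closed assms by auto
  let ?p = "\<lambda>m. finsum Q (\<lambda>i. cls (b i)) {..<m}"
  have ps: "?p m \<ominus>\<^bsub>Q\<^esub> cls (fsum R w b) = cls (partial_sum b m \<ominus> fsum R w b)" for m
    unfolding partial_sum_def using assms c by (simp add: cls_finsum cls_minus Pi_def)
  have conv: "fconv Q (quot_filt w) ?p (cls (fsum R w b))"
    unfolding fconv_def
  proof (intro conjI allI)
    show "cls (fsum R w b) \<in> carrier Q" using c by (simp add: cls_closed)
    fix N :: real
    obtain M where M: "\<forall>n\<ge>M. ereal N \<le> w (partial_sum b n \<ominus> fsum R w b)"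
      using c unfolding fconv_def by blast
    have "ereal N \<le> wbar (partial_sum b n \<ominus> fsum R w b)" if "n \<ge> M" for n
      using order.trans[OF M[rule_format, OF that] w_le_wbar] assms c by simp
    then show "\<exists>M. \<forall>n\<ge>M. ereal N \<le> quot_filt w (?p n \<ominus>\<^bsub>Q\<^esub> cls (fsum R w b))"
      unfolding ps by blast
  qed
  have "\<And>m. ?p m \<in> carrier Q" using assms by (auto intro!: Q.finsum_closed cls_closed)
  then have "(THE L. fconv Q (quot_filt w) ?p L) = cls (fsum R w b)"
    using conv quot_fconv_unique by (intro the_equality) blast+
  then show ?thesis unfolding fsum_def .
qed

lemma coef_cls: "a \<in> carrier R \<Longrightarrow> skw_coef Q sigma_bar delta_bar i k (cls a) = cls (coef i k a)"
  by (induction i arbitrary: k) (simp_all add: cls_zero Q_zero quot_map_sigma quot_map_delta cls_add)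

definition proj_ps :: "(nat \<Rightarrow> 'a) \<Rightarrow> nat \<Rightarrow> 'a set" where
  "proj_ps u = (\<lambda>n. cls (u n))"

lemma proj_ps_closed:
  assumes u: "u \<in> carrier S"
  shows "proj_ps u \<in> carrier T"
  unfolding T_carrier_iff proj_ps_def
proof (intro conjI allI)
  show "cls (u n) \<in> carrier Q" for n using u by (simp add: cls_closed)
  fix N :: real
  obtain M where M: "\<forall>n\<ge>M. ereal (N - real n / 2) \<le> w (u n)"
    using u unfolding S_carrier_iff coeff_growth_def by blast
  have "ereal (N - real n / 2) \<le> wbar (u n)" if "n \<ge> M" for n
    using order.trans[OF M[rule_format, OF that] w_le_wbar[OF S_coeff_closed[OF u]]] .
  then show "\<exists>M. \<forall>n\<ge>M. ereal (N - real n / 2) \<le> wbar (u n)" by blast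
qed

lemma proj_ps_mult: "u \<in> carrier S \<Longrightarrow> v \<in> carrier S \<Longrightarrow> proj_ps (u \<otimes>\<^bsub>S\<^esub> v) = proj_ps u \<otimes>\<^bsub>T\<^esub> proj_ps v"
proof (rule ext)
  fix n assume u: "u \<in> carrier S" and v: "v \<in> carrier S"
  interpret Q: ring Q by (rule Q_ring)
  have coeff_eq: "fsum Q (quot_filt w) (\<lambda>i. cls (u i) \<otimes>\<^bsub>Q\<^esub> skw_coef Q sigma_bar delta_bar i (n - j) (cls (v j)))
      = cls (fsum R w (mult_term u v n j))" if "j \<le> n" for j
    using cls_fsum[of "mult_term u v n j"] tends_to_zero_mult_term[OF u v that] u v
    by (simp add: mult_term_def coef_cls cls_mult)
  have "cls (ps_mult u v n) = finsum Q (\<lambda>j. cls (fsum R w (mult_term u v n j))) {..n}"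
    unfolding ps_mult_def using u v by (intro cls_finsum) (auto intro!: fsum_mult_term_closed)
  also have "\<dots> = finsum Q (\<lambda>j. fsum Q (quot_filt w)
      (\<lambda>i. cls (u i) \<otimes>\<^bsub>Q\<^esub> skw_coef Q sigma_bar delta_bar i (n - j) (cls (v j)))) {..n}"
    using u v coeff_eq by (intro Q.finsum_cong) (auto intro!: cls_closed fsum_mult_term_closed)
  finally show "proj_ps (u \<otimes>\<^bsub>S\<^esub> v) n = (proj_ps u \<otimes>\<^bsub>T\<^esub> proj_ps v) n"
    unfolding S_mult proj_ps_def by (simp add: skew_ps_def)
qed

lemma proj_ps_hom: "proj_ps \<in> ring_hom S T"
proof (rule ring_hom_memI)
  show "\<And>x. x \<in> carrier S \<Longrightarrow> proj_ps x \<in> carrier T" by (rule proj_ps_closed)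
  show "\<And>x y. x \<in> carrier S \<Longrightarrow> y \<in> carrier S \<Longrightarrow>
      proj_ps (x \<otimes>\<^bsub>S\<^esub> y) = proj_ps x \<otimes>\<^bsub>T\<^esub> proj_ps y" by (rule proj_ps_mult)
  show "\<And>x y. x \<in> carrier S \<Longrightarrow> y \<in> carrier S \<Longrightarrow>
      proj_ps (x \<oplus>\<^bsub>S\<^esub> y) = proj_ps x \<oplus>\<^bsub>T\<^esub> proj_ps y"
    unfolding proj_ps_def S_add by (simp add: skew_ps_def cls_add)
  show "proj_ps \<one>\<^bsub>S\<^esub> = \<one>\<^bsub>T\<^esub>"
    unfolding proj_ps_def S_one const_ps_def by (simp add: skew_ps_def fun_eq_iff cls_one cls_zero Q_zero)
qed

lemma good_representative:
  assumes "C \<in> carrier Q"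
  shows "\<exists>r\<in>C. \<forall>B. ereal B \<le> quot_filt w C \<longrightarrow> B \<le> c \<longrightarrow> ereal (B - 1) \<le> w r"
proof -
  obtain x where x: "x \<in> carrier R" "C = cls x" using assms Q_carrier by blast
  have "min (quot_filt w C) (ereal c) \<noteq> -\<infinity>" "min (quot_filt w C) (ereal c) \<noteq> \<infinity>"
    using wbar_not_MInf[OF x(1)] x(2) by (auto simp: min_def)
  then obtain b where b: "min (quot_filt w C) (ereal c) = ereal b"
    by (cases "min (quot_filt w C) (ereal c)") auto
  then have "ereal b \<le> quot_filt w C" using min.cobounded1[of "quot_filt w C" "ereal c"] by simp
  then have "ereal (b - 1) < quot_filt w C" by (rule less_le_trans[rotated]) simp
  then obtain r where r: "r \<in> C" "ereal (b - 1) < w r" using quot_filt_gtD by blast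
  have "ereal (B - 1) \<le> w r" if "ereal B \<le> quot_filt w C" "B \<le> c" for B
  proof -
    have "ereal B \<le> ereal b" using that b[symmetric] by simp
    then have "ereal (B - 1) \<le> ereal (b - 1)" by simp
    also have "\<dots> \<le> w r" using r(2) by (rule less_imp_le)
    finally show ?thesis .
  qed
  then show ?thesis using r(1) by blast
qed

lemma proj_ps_surj: "proj_ps ` carrier S = carrier T"
proof
  show "proj_ps ` carrier S \<subseteq> carrier T" using proj_ps_closed by blast
  show "carrier T \<subseteq> proj_ps ` carrier S"
  proof
    fix U assume "U \<in> carrier T"
    then have UQ: "\<And>n. U n \<in> carrier Q"
      and Ugrowth: "\<forall>N::real. \<exists>M. \<forall>n\<ge>M. ereal (N - real n / 2) \<le> quot_filt w (U n)"
      unfolding T_carrier_iff by auto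
    have "\<forall>n. \<exists>r\<in>U n. \<forall>B. ereal B \<le> quot_filt w (U n) \<longrightarrow> B \<le> real n \<longrightarrow> ereal (B - 1) \<le> w r"
      using good_representative[OF UQ] by blast
    then obtain r where r: "\<And>n. r n \<in> U n"
      and wr: "\<And>n B. ereal B \<le> quot_filt w (U n) \<Longrightarrow> B \<le> real n \<Longrightarrow> ereal (B - 1) \<le> w (r n)"
      by metis
    have cls_r: "r n \<in> carrier R \<and> cls (r n) = U n" for n
    proof -
      obtain x where x: "x \<in> carrier R" "U n = cls x" using UQ[of n] Q_carrier by blast
      then obtain i where "i \<in> I" "r n = i \<oplus> x" using r[of n] cls_mem_iff by blast
      then show ?thesis using I_carrier x r[of n] cls_eq_if_mem by simp
    qed
    have "coeff_growth r" unfolding coeff_growth_def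
    proof
      fix N :: real
      obtain M where M: "\<forall>n\<ge>M. ereal (N + 1 - real n / 2) \<le> quot_filt w (U n)" using Ugrowth by blast
      obtain M' :: nat where M': "N + 1 \<le> real M'" using real_arch_simple by blast
      have "ereal (N + 1 - real n / 2 - 1) \<le> w (r n)" if "n \<ge> max M M'" for n
        using that M M' by (intro wr) auto
      then have "ereal (N - real n / 2) \<le> w (r n)" if "n \<ge> max M M'" for n
        using that by (simp add: algebra_simps)
      then show "\<exists>M. \<forall>n\<ge>M. ereal (N - real n / 2) \<le> w (r n)" by blast
    qed
    then have "r \<in> carrier S" using cls_r unfolding S_carrier_iff by blast
    moreover have "proj_ps r = U" unfolding proj_ps_def using cls_r by auto
    ultimately show "U \<in> proj_ps ` carrier S" by blast
  qed
qed

lemma proj_ps_kernel: "a_kernel S T proj_ps = ps_closure R w IS"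
  unfolding a_kernel_def' ps_closure_IS_eq proj_ps_def
proof (intro Collect_cong conj_cong refl)
  fix u assume "u \<in> carrier S"
  then show "((\<lambda>n. cls (u n)) = \<zero>\<^bsub>T\<^esub>) = (\<forall>n. u n \<in> I)"
    using cls_eq_I_iff by (auto simp: skew_ps_def Q_zero fun_eq_iff)
qed

lemma T_ring: "ring T"
  using ring.ring_hom_imp_img_ring[OF S_ring proj_ps_hom]
  unfolding proj_ps_surj by (simp add: proj_ps_def S_zero skew_ps_def cls_zero Q_zero)

lemma quotient_iso: "S Quot ps_closure R w IS \<simeq> T"
  using ring_hom_ring.FactRing_iso[OF ring_hom_ringI2[OF S_ring T_ring proj_ps_hom] proj_ps_surj]
  unfolding proj_ps_kernel .

end

theorem lemma2p1p2:
  fixes R :: "('a,'m) ring_scheme" and w :: "'a \<Rightarrow> ereal"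
    and \<sigma> \<delta> :: "'a \<Rightarrow> 'a" and I :: "'a set"
  assumes "ring R"
    and "filtration R w" and "separated R w" and "fcomplete R w" and "zariskian R w"
    and "skew_derivation R \<sigma> \<delta>" and "compatible R w \<sigma> \<delta>"
    and "ideal I R" and "fclosed R w I"
    and "\<sigma> ` I \<subseteq> I" and "\<delta> ` I \<subseteq> I"
  shows "skew_derivation (R Quot I) (quot_map R I \<sigma>) (quot_map R I \<delta>)
       \<and> compatible (R Quot I) (quot_filt w) (quot_map R I \<sigma>) (quot_map R I \<delta>)
       \<and> ideal (ps_closure R w (ideal_times_S R w \<sigma> \<delta> I)) (skew_ps R w \<sigma> \<delta>)
       \<and> (skew_ps R w \<sigma> \<delta>) Quot (ps_closure R w (ideal_times_S R w \<sigma> \<delta> I))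
           \<simeq> skew_ps (R Quot I) (quot_filt w) (quot_map R I \<sigma>) (quot_map R I \<delta>)"
proof -
  interpret skew_stable_ideal R w \<sigma> \<delta> I
    by (intro skew_stable_ideal.intro skew_filtered_ring.intro complete_filtered_ring.intro
        skew_stable_ideal_axioms.intro skew_filtered_ring_axioms.intro complete_filtered_ring_axioms.intro)
      (rule assms)+
  show ?thesis
    using quotient_skew_derivation quotient_compatible ps_closure_IS_ideal quotient_iso by blast
qed

end
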